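(* Let $Y=(Y(t))_{0\leq t\leq 1}$ be a Yule-Simon process with parameter $\rho>0$. (i) If $\rho>1$, then $\mathbb{E}[Y(t)]=\frac{\rho}{\rho-1}\,t$ for every $t\in[0,1]$. (ii) If $\rho>2$, then for every $0< s\leq t\leq 1$, $$\mathbb{E}[Y(t)Y(s)]=\frac{\rho^2}{(\rho-1)(\rho-2)}\, s\left(\frac{t}{s}\right)^{1/\rho}.$$
   Context: A Yule-Simon process with parameter $\rho>0$ is an integer-valued process $Y=(Y(t))_{0\leq t\leq 1}$ which is a time-inhomogeneous pure birth (counting) process started from $Y(0)=0$ a.s., with time-dependent birth rates $\lambda_k(t)=\lim_{h\to0+}h^{-1}\mathbb{P}(Y(t+h)=k+1\mid Y(t)=k)$ for $0\le t<1$, $k\in\mathbb{N}$, given by $\lambda_0(t)=1/(1-t)$ and $\lambda_k(t)=k/(\rho t)$ for $k\geq 1$. *)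

theory Defs
  imports "HOL-Probability.Probability"
begin

definition cond_prob :: "'a measure \<Rightarrow> 'a set \<Rightarrow> 'a set \<Rightarrow> real" where
  "cond_prob M A B = measure M (A \<inter> B) / measure M B"

definition yule_simon_rate :: "real \<Rightarrow> nat \<Rightarrow> real \<Rightarrow> real" where
  "yule_simon_rate \<rho> k t = (if k = 0 then 1 / (1 - t) else real k / (\<rho> * t))"

text \<open>A (time-inhomogeneous) pure birth counting process on the time interval [0,1]
  with birth rates lam k t, started at 0: a stochastically continuous Markov process with
  values in the naturals, nondecreasing, with
  P(Y(t+h) = k+1 | Y(t) = k) = lam k t h + o(h) and P(Y(t+h) = k | Y(t) = k) = 1 - lam k t h + o(h).\<close>
definition pure_birth_process ::
  "'a measure \<Rightarrow> (real \<Rightarrow> 'a \<Rightarrow> nat) \<Rightarrow> (nat \<Rightarrow> real \<Rightarrow> real) \<Rightarrow> bool" where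
  "pure_birth_process M Y lam \<longleftrightarrow>
     prob_space M \<and>
     (\<forall>t\<in>{0..1}. Y t \<in> measurable M (count_space UNIV)) \<and>
     (AE \<omega> in M. Y 0 \<omega> = 0) \<and>
     (\<forall>s t. 0 \<le> s \<and> s \<le> t \<and> t \<le> 1 \<longrightarrow> (AE \<omega> in M. Y s \<omega> \<le> Y t \<omega>)) \<and>
     (\<forall>t\<in>{0..1}. ((\<lambda>u. measure M {\<omega>\<in>space M. Y u \<omega> \<noteq> Y t \<omega>}) \<longlongrightarrow> 0) (at t within {0..1})) \<and>
     (\<forall>(n::nat) (s::nat \<Rightarrow> real) (j::nat \<Rightarrow> nat) t k.
        0 \<le> s 0 \<and> (\<forall>i<n. s i < s (Suc i)) \<and> s n < t \<and> t \<le> 1 \<and>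
        measure M {\<omega>\<in>space M. \<forall>i\<le>n. Y (s i) \<omega> = j i} > 0 \<longrightarrow>
        cond_prob M {\<omega>\<in>space M. Y t \<omega> = k} {\<omega>\<in>space M. \<forall>i\<le>n. Y (s i) \<omega> = j i}
          = cond_prob M {\<omega>\<in>space M. Y t \<omega> = k} {\<omega>\<in>space M. Y (s n) \<omega> = j n}) \<and>
     (\<forall>t k. 0 \<le> t \<and> t < 1 \<and> measure M {\<omega>\<in>space M. Y t \<omega> = k} > 0 \<longrightarrow>
        ((\<lambda>h. cond_prob M {\<omega>\<in>space M. Y (t + h) \<omega> = Suc k} {\<omega>\<in>space M. Y t \<omega> = k} / h)
           \<longlongrightarrow> lam k t) (at_right 0) \<and>
        ((\<lambda>h. (1 - cond_prob M {\<omega>\<in>space M. Y (t + h) \<omega> = k} {\<omega>\<in>space M. Y t \<omega> = k}) / h)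
           \<longlongrightarrow> lam k t) (at_right 0))"

definition yule_simon_process :: "'a measure \<Rightarrow> (real \<Rightarrow> 'a \<Rightarrow> nat) \<Rightarrow> real \<Rightarrow> bool" where
  "yule_simon_process M Y \<rho> \<longleftrightarrow> pure_birth_process M Y (yule_simon_rate \<rho>)"

end

theory Submission
  imports Defs
begin

text \<open>Let \<open>B\<close> be an event that leaves the transitions after some time unaffected (the whole space,
  or \<open>{Y s = j}\<close> after time \<open>s\<close>). The Markov property and the birth rates give the forward
  equations \<open>d/dt P(B, Y t > k) = \<lambda>\<^sub>k(t) P(B, Y t = k)\<close> as right derivatives. For the Yule-Simon
  rates \<open>\<lambda>\<^sub>k(t) = k/(\<rho> t)\<close>, \<open>k \<ge> 1\<close>, they make every truncated moment of \<open>Y t\<close> a subsolution of a linear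
  equation \<open>V' = \<alpha> + \<kappa> V / t\<close>, so comparison through the integrating factor \<open>t powr (-\<kappa>)\<close>
  bounds the moments from above. The bound makes the moments finite, so the truncation error
  vanishes and the full moment is an approximate supersolution, which gives the matching lower
  bound. For \<open>E[Y t]\<close> (\<open>\<kappa> = 1/\<rho>\<close>) and \<open>E[(Y t)\<^sup>2]\<close> (\<open>\<kappa> = 2/\<rho>\<close>) the conditions \<open>\<rho> > 1\<close>,
  \<open>\<rho> > 2\<close> mean \<open>\<kappa> < 1\<close>, which lets the comparison start at \<open>t = 0\<close>, where \<open>P(Y t \<ge> 1) = t\<close>. The
  conditional mean \<open>E[Y t; Y s = j]\<close> solves \<open>V' = V / (\<rho> t)\<close> from \<open>V s = j P(Y s = j)\<close>, and
  summing over \<open>j\<close> gives \<open>E[Y t Y s]\<close>.\<close>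

section \<open>One-sided derivatives and linear comparison\<close>

text \<open>Continuous induction: the supremum of the points up to which the bound holds is \<open>b\<close>.\<close>

lemma right_dini_nonneg_imp_le_eps:
  fixes g :: "real \<Rightarrow> real"
  assumes "a \<le> b" and "\<epsilon> > 0"
    and right: "\<And>x e. x \<in> {a..<b} \<Longrightarrow> e > 0 \<Longrightarrow>
                  \<exists>\<delta>>0. \<forall>h. 0 < h \<and> h < \<delta> \<longrightarrow> g x - e * h \<le> g (x + h)"
    and left: "\<And>x e. x \<in> {a<..b} \<Longrightarrow> e > 0 \<Longrightarrow>
                  \<exists>\<delta>>0. \<forall>y. x - \<delta> < y \<and> y < x \<longrightarrow> g y \<le> g x + e"
  shows "g a - \<epsilon> * (b - a) \<le> g b"
proof -
  define S where "S = {x\<in>{a..b}. g a - \<epsilon> * (x - a) \<le> g x}"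
  have aS: "a \<in> S" using assms(1) by (simp add: S_def)
  have bdd: "bdd_above S" unfolding S_def by (rule bdd_aboveI[of _ b]) auto
  define c where "c = Sup S"
  have ac: "a \<le> c" unfolding c_def using aS bdd by (rule cSup_upper)
  have cb: "c \<le> b" unfolding c_def using aS by (intro cSup_least) (auto simp: S_def)
  have cS: "c \<in> S"
  proof (cases "c = a")
    case False
    with ac have "a < c" by simp
    have "g a - \<epsilon> * (c - a) \<le> g c + \<eta>" if "\<eta> > 0" for \<eta>
    proof -
      obtain \<delta> where \<delta>: "\<delta> > 0" "\<forall>y. c - \<delta> < y \<and> y < c \<longrightarrow> g y \<le> g c + \<eta>"
        using left[of c \<eta>] \<open>a < c\<close> cb \<open>\<eta> > 0\<close> by auto
      have "c - \<delta> < Sup S" using \<delta>(1) c_def by simp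
      then obtain y where y: "y \<in> S" "c - \<delta> < y" using aS less_cSupE by blast
      have "y \<le> c" unfolding c_def using y(1) bdd by (rule cSup_upper)
      show ?thesis
      proof (cases "y = c")
        case True then show ?thesis using y(1) \<open>\<eta> > 0\<close> by (simp add: S_def)
      next
        case False
        with \<open>y \<le> c\<close> \<delta> y have "g y \<le> g c + \<eta>" by auto
        moreover have "g a - \<epsilon> * (y - a) \<le> g y" using y(1) by (simp add: S_def)
        moreover have "\<epsilon> * (y - a) \<le> \<epsilon> * (c - a)" using \<open>y \<le> c\<close> assms(2) by simp
        ultimately show ?thesis by linarith
      qed
    qed
    then have "g a - \<epsilon> * (c - a) \<le> g c" by (rule field_le_epsilon)
    then show ?thesis using ac cb by (simp add: S_def)
  qed (use aS in simp)
  have "c = b"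
  proof (rule ccontr)
    assume "c \<noteq> b"
    with cb have "c < b" by simp
    obtain \<delta> where \<delta>: "\<delta> > 0" "\<forall>h. 0 < h \<and> h < \<delta> \<longrightarrow> g c - \<epsilon> * h \<le> g (c + h)"
      using right[of c \<epsilon>] ac \<open>c < b\<close> assms(2) by auto
    define h where "h = min (\<delta> / 2) ((b - c) / 2)"
    have h: "0 < h" "h < \<delta>" "c + h \<le> b"
      using \<delta>(1) \<open>c < b\<close> unfolding h_def min_def by (auto simp: field_simps)
    have "g a - \<epsilon> * (c - a) \<le> g c" using cS by (simp add: S_def)
    with \<delta> h have "c + h \<in> S" using ac by (auto simp: S_def algebra_simps)
    then have "c + h \<le> c" unfolding c_def using bdd by (rule cSup_upper)
    then show False using h by simp
  qed
  then show ?thesis using cS by (simp add: S_def)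
qed

text \<open>The hypotheses say that the lower right Dini derivative of \<open>g\<close> is nonnegative and that \<open>g\<close>
  is upper semicontinuous from the left.\<close>

lemma right_dini_nonneg_imp_le:
  fixes g :: "real \<Rightarrow> real"
  assumes "a \<le> b"
    and right: "\<And>x e. x \<in> {a..<b} \<Longrightarrow> e > 0 \<Longrightarrow>
                  \<exists>\<delta>>0. \<forall>h. 0 < h \<and> h < \<delta> \<longrightarrow> g x - e * h \<le> g (x + h)"
    and left: "\<And>x e. x \<in> {a<..b} \<Longrightarrow> e > 0 \<Longrightarrow>
                  \<exists>\<delta>>0. \<forall>y. x - \<delta> < y \<and> y < x \<longrightarrow> g y \<le> g x + e"
  shows "g a \<le> g b"
proof (rule field_le_epsilon)
  fix e :: real assume "e > 0"
  define \<epsilon> where "\<epsilon> = e / (b - a + 1)"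
  have "\<epsilon> > 0" using \<open>e > 0\<close> assms(1) by (simp add: \<epsilon>_def)
  have "g a - \<epsilon> * (b - a) \<le> g b"
    by (rule right_dini_nonneg_imp_le_eps[OF assms(1) \<open>\<epsilon> > 0\<close> right left]) auto
  moreover have "\<epsilon> * (b - a + 1) = e" using assms(1) by (simp add: \<epsilon>_def)
  then have "\<epsilon> * (b - a) \<le> e" using \<open>\<epsilon> > 0\<close> by (simp add: algebra_simps)
  ultimately show "g a \<le> g b + e" by linarith
qed

lemma has_real_derivative_right_approx:
  fixes g :: "real \<Rightarrow> real"
  assumes "(g has_real_derivative D) (at x within {x..})" "e > 0"
  shows "\<exists>\<delta>>0. \<forall>h. 0 < h \<and> h < \<delta> \<longrightarrow> \<bar>g (x + h) - g x - D * h\<bar> \<le> e * h"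
proof -
  have "((\<lambda>y. (g y - g x) / (y - x)) \<longlongrightarrow> D) (at x within {x..})"
    using assms(1) by (simp add: has_field_derivative_iff)
  then have "eventually (\<lambda>y. dist ((g y - g x) / (y - x)) D < e) (at x within {x..})"
    using assms(2) by (rule tendstoD)
  then obtain d where d: "d > 0"
    "\<And>y. y \<in> {x..} \<Longrightarrow> y \<noteq> x \<Longrightarrow> dist y x < d \<Longrightarrow> dist ((g y - g x) / (y - x)) D < e"
    unfolding eventually_at by blast
  show ?thesis
  proof (intro exI[of _ d] conjI allI impI)
    fix h :: real assume h: "0 < h \<and> h < d"
    then have "\<bar>(g (x + h) - g x) / h - D\<bar> < e"
      using d(2)[of "x + h"] by (auto simp: dist_real_def)
    then have "\<bar>((g (x + h) - g x) / h - D) * h\<bar> \<le> e * h" using h by (simp add: abs_mult)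
    moreover have "((g (x + h) - g x) / h - D) * h = g (x + h) - g x - D * h"
      using h by (simp add: field_simps)
    ultimately show "\<bar>g (x + h) - g x - D * h\<bar> \<le> e * h" by simp
  qed (use d in auto)
qed

lemma continuous_on_left_upper_bound:
  fixes g :: "real \<Rightarrow> real"
  assumes "continuous_on {a..b} g" "x \<in> {a<..b}" "e > 0"
  shows "\<exists>\<delta>>0. \<forall>y. x - \<delta> < y \<and> y < x \<longrightarrow> g y \<le> g x + e"
proof -
  obtain d where d: "d > 0" "\<And>y. y \<in> {a..b} \<Longrightarrow> dist y x < d \<Longrightarrow> dist (g y) (g x) < e"
    using assms unfolding continuous_on_iff by (metis greaterThanAtMost_iff atLeastAtMost_iff less_imp_le)
  show ?thesis
  proof (intro exI[of _ "min d (x - a)"] conjI allI impI)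
    fix y assume "x - min d (x - a) < y \<and> y < x"
    then have "dist (g y) (g x) < e" using assms(2) by (intro d(2)) (auto simp: dist_real_def)
    then show "g y \<le> g x + e" by (simp add: dist_real_def)
  qed (use d assms(2) in auto)
qed

lemma right_derivative_nonneg_imp_le:
  fixes g :: "real \<Rightarrow> real"
  assumes "a \<le> b" "continuous_on {a..b} g"
    and "\<And>x. x \<in> {a..<b} \<Longrightarrow> \<exists>D\<ge>0. (g has_real_derivative D) (at x within {x..})"
  shows "g a \<le> g b"
proof (rule right_dini_nonneg_imp_le[OF assms(1)])
  fix x e :: real assume "x \<in> {a..<b}" "e > 0"
  then obtain D where D: "D \<ge> 0" "(g has_real_derivative D) (at x within {x..})"
    using assms(3) by blast
  obtain \<delta> where \<delta>: "\<delta> > 0" "\<forall>h. 0 < h \<and> h < \<delta> \<longrightarrow> \<bar>g (x + h) - g x - D * h\<bar> \<le> e * h"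
    using has_real_derivative_right_approx[OF D(2) \<open>e > 0\<close>] by blast
  show "\<exists>\<delta>>0. \<forall>h. 0 < h \<and> h < \<delta> \<longrightarrow> g x - e * h \<le> g (x + h)"
  proof (intro exI[of _ \<delta>] conjI allI impI)
    fix h assume h: "0 < h \<and> h < \<delta>"
    then have "\<bar>g (x + h) - g x - D * h\<bar> \<le> e * h" "0 \<le> D * h" using \<delta>(2) D(1) by auto
    then show "g x - e * h \<le> g (x + h)" by (simp add: abs_le_iff)
  qed (fact \<delta>(1))
next
  fix x e :: real assume "x \<in> {a<..b}" "e > 0"
  then show "\<exists>\<delta>>0. \<forall>y. x - \<delta> < y \<and> y < x \<longrightarrow> g y \<le> g x + e"
    by (rule continuous_on_left_upper_bound[OF assms(2)])
qed

lemma right_derivative_zero_imp_eq: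
  fixes g :: "real \<Rightarrow> real"
  assumes "a \<le> b" "continuous_on {a..b} g"
    and "\<And>x. x \<in> {a..<b} \<Longrightarrow> (g has_real_derivative 0) (at x within {x..})"
  shows "g a = g b"
proof (rule antisym)
  show "g a \<le> g b"
  proof (rule right_derivative_nonneg_imp_le[OF assms(1,2)])
    fix x assume "x \<in> {a..<b}"
    with assms(3) show "\<exists>D\<ge>0. (g has_real_derivative D) (at x within {x..})" by blast
  qed
  have "(\<lambda>x. - g x) a \<le> (\<lambda>x. - g x) b"
  proof (rule right_derivative_nonneg_imp_le[where g = "\<lambda>x. - g x"])
    fix x assume "x \<in> {a..<b}"
    then have "((\<lambda>x. - g x) has_real_derivative 0) (at x within {x..})"
      using DERIV_minus[OF assms(3)] by simp
    then show "\<exists>D\<ge>0. ((\<lambda>x. - g x) has_real_derivative D) (at x within {x..})" by blast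
  qed (use assms(1) continuous_on_minus[OF assms(2)] in auto)
  then show "g b \<le> g a" by simp
qed

lemma has_real_derivative_powr_within:
  assumes "t > 0"
  shows "((\<lambda>u. u powr r) has_real_derivative r * t powr r / t) (at t within S)"
proof -
  have "((\<lambda>u. u powr r) has_real_derivative r * t powr (r - 1)) (at t)"
    by (rule has_real_derivative_powr[OF assms])
  moreover have "t powr (r - 1) = t powr r / t" using assms by (simp add: powr_diff)
  ultimately show ?thesis by (auto intro: has_field_derivative_at_within)
qed

text \<open>Comparison for the linear equation \<open>V' = \<alpha> t + \<kappa> V / t\<close> with right derivatives: the integrating
  factor \<open>t powr (-\<kappa>)\<close> turns a subsolution minus a solution into a nonincreasing function.\<close>

lemma ode_comparison_upper:
  fixes T V \<alpha> :: "real \<Rightarrow> real"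
  assumes "0 < a" "a \<le> b"
    and "continuous_on {a..b} T" "continuous_on {a..b} V"
    and V: "\<And>t. t \<in> {a..<b} \<Longrightarrow> (V has_real_derivative \<alpha> t + \<kappa> / t * V t) (at t within {t..})"
    and T: "\<And>t. t \<in> {a..<b} \<Longrightarrow>
              \<exists>D. (T has_real_derivative D) (at t within {t..}) \<and> D \<le> \<alpha> t + \<kappa> / t * T t"
  shows "b powr (-\<kappa>) * (T b - V b) \<le> a powr (-\<kappa>) * (T a - V a)"
proof -
  define g where "g t = - (t powr (-\<kappa>) * (T t - V t))" for t
  have "g a \<le> g b"
  proof (rule right_derivative_nonneg_imp_le[OF assms(2)])
    show "continuous_on {a..b} g"
      unfolding g_def using assms(1,3,4) by (intro continuous_intros) auto
  next
    fix t assume t: "t \<in> {a..<b}"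
    then have "t > 0" using assms(1) by auto
    obtain D where D: "(T has_real_derivative D) (at t within {t..})" "D \<le> \<alpha> t + \<kappa> / t * T t"
      using T[OF t] by blast
    define p where "p = t powr (-\<kappa>)"
    have "p > 0" using \<open>t > 0\<close> by (simp add: p_def)
    have "(g has_real_derivative
            - ((-\<kappa>) * p / t * (T t - V t) + p * (D - (\<alpha> t + \<kappa> / t * V t)))) (at t within {t..})"
      unfolding g_def p_def
      using DERIV_minus[OF DERIV_mult[OF has_real_derivative_powr_within[OF \<open>t > 0\<close>, where r = "-\<kappa>"]
                                         DERIV_diff[OF D(1) V[OF t]]]]
      by (simp add: algebra_simps)
    moreover have "p * (D - (\<alpha> t + \<kappa> / t * V t)) \<le> p * (\<kappa> / t * T t - \<kappa> / t * V t)"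
      using D(2) \<open>p > 0\<close> by (intro mult_left_mono) auto
    then have "- ((-\<kappa>) * p / t * (T t - V t) + p * (D - (\<alpha> t + \<kappa> / t * V t))) \<ge> 0"
      using \<open>t > 0\<close> by (simp add: field_simps)
    ultimately show "\<exists>D\<ge>0. (g has_real_derivative D) (at t within {t..})" by blast
  qed
  then show ?thesis by (simp add: g_def)
qed

lemma powr_mult_mono_diff_left_upper_bound:
  fixes F V :: "real \<Rightarrow> real"
  assumes "x \<in> {a<..b}" "e > 0" "0 < a" "continuous_on {a..b} V"
    and mono_F: "\<And>s t. a \<le> s \<Longrightarrow> s \<le> t \<Longrightarrow> t \<le> b \<Longrightarrow> F s \<le> F t"
  shows "\<exists>\<delta>>0. \<forall>y. x - \<delta> < y \<and> y < x \<longrightarrow>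
           y powr (-\<kappa>) * (F y - V y) \<le> x powr (-\<kappa>) * (F x - V x) + e"
proof -
  define k where "k y = y powr (-\<kappa>) * F x - y powr (-\<kappa>) * V y" for y
  have "continuous_on {a..b} k" unfolding k_def using assms(3,4)
    by (intro continuous_intros) auto
  then obtain \<delta> where \<delta>: "\<delta> > 0" "\<forall>y. x - \<delta> < y \<and> y < x \<longrightarrow> k y \<le> k x + e"
    using continuous_on_left_upper_bound assms(1,2) by blast
  show ?thesis
  proof (intro exI[of _ "min \<delta> (x - a)"] conjI allI impI)
    fix y assume y: "x - min \<delta> (x - a) < y \<and> y < x"
    then have "F y \<le> F x" using assms(1) by (intro mono_F) auto
    then have "y powr (-\<kappa>) * (F y - V y) \<le> k y"
      unfolding k_def by (simp add: right_diff_distrib mult_left_mono)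
    also have "k y \<le> k x + e" using \<delta> y by auto
    finally show "y powr (-\<kappa>) * (F y - V y) \<le> x powr (-\<kappa>) * (F x - V x) + e"
      by (simp add: k_def algebra_simps)
  qed (use \<delta> assms(1) in auto)
qed

text \<open>The lower comparison only needs \<open>F\<close> to be an approximate supersolution: near each \<open>t\<close>, the
  increments of \<open>F\<close> dominate those of a function whose right derivative is almost
  \<open>\<alpha> t + \<kappa> F t / t\<close>; left upper semicontinuity comes from monotonicity of \<open>F\<close>.\<close>

lemma ode_comparison_lower:
  fixes F V \<alpha> :: "real \<Rightarrow> real"
  assumes "0 < a" "a \<le> b"
    and cont_V: "continuous_on {a..b} V"
    and V: "\<And>t. t \<in> {a..<b} \<Longrightarrow> (V has_real_derivative \<alpha> t + \<kappa> / t * V t) (at t within {t..})"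
    and mono_F: "\<And>s t. a \<le> s \<Longrightarrow> s \<le> t \<Longrightarrow> t \<le> b \<Longrightarrow> F s \<le> F t"
    and F: "\<And>t e. t \<in> {a..<b} \<Longrightarrow> e > 0 \<Longrightarrow> \<exists>T D. (T has_real_derivative D) (at t within {t..}) \<and>
             D \<ge> \<alpha> t + \<kappa> / t * F t - e \<and> (\<forall>h>0. t + h \<le> b \<longrightarrow> T (t + h) - T t \<le> F (t + h) - F t)"
  shows "a powr (-\<kappa>) * (F a - V a) \<le> b powr (-\<kappa>) * (F b - V b)"
proof -
  define g where "g t = t powr (-\<kappa>) * (F t - V t)" for t
  have "g a \<le> g b"
  proof (rule right_dini_nonneg_imp_le[OF assms(2)])
    fix x e :: real assume x: "x \<in> {a..<b}" and "e > 0"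
    then have "x > 0" using assms(1) by auto
    define p where "p = x powr (-\<kappa>)"
    have "p > 0" using \<open>x > 0\<close> by (simp add: p_def)
    obtain T D where T: "(T has_real_derivative D) (at x within {x..})"
      "D \<ge> \<alpha> x + \<kappa> / x * F x - e / (2 * p)" "\<forall>h>0. x + h \<le> b \<longrightarrow> T (x + h) - T x \<le> F (x + h) - F x"
      using F[OF x, of "e / (2 * p)"] \<open>e > 0\<close> \<open>p > 0\<close> by auto
    define \<phi> where "\<phi> u = u powr (-\<kappa>) * (F x + T u - T x - V u)" for u
    define D\<phi> where "D\<phi> = (-\<kappa>) * p / x * (F x - V x) + p * (D - (\<alpha> x + \<kappa> / x * V x))"
    have "(\<phi> has_real_derivative D\<phi>) (at x within {x..})"
      unfolding \<phi>_def D\<phi>_def p_def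
      using DERIV_mult[OF has_real_derivative_powr_within[OF \<open>x > 0\<close>, where r = "-\<kappa>"]
                          DERIV_diff[OF DERIV_diff[OF DERIV_add[OF DERIV_const[of "F x"] T(1)]
                                                      DERIV_const[of "T x"]] V[OF x]]]
      by (simp add: algebra_simps)
    then obtain \<delta> where \<delta>: "\<delta> > 0" "\<forall>h. 0 < h \<and> h < \<delta> \<longrightarrow> \<bar>\<phi> (x + h) - \<phi> x - D\<phi> * h\<bar> \<le> e / 2 * h"
      using has_real_derivative_right_approx[of \<phi> D\<phi> x "e / 2"] \<open>e > 0\<close> by auto
    have "\<kappa> * p / x * (F x - V x) - e / 2 = p * (\<kappa> / x * F x - e / (2 * p) - \<kappa> / x * V x)"
      using \<open>p > 0\<close> \<open>x > 0\<close> by (simp add: field_simps)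
    also have "\<dots> \<le> p * (D - (\<alpha> x + \<kappa> / x * V x))"
      using T(2) \<open>p > 0\<close> by (intro mult_left_mono) auto
    finally have "D\<phi> \<ge> - e / 2" unfolding D\<phi>_def by (simp add: algebra_simps)
    show "\<exists>\<delta>>0. \<forall>h. 0 < h \<and> h < \<delta> \<longrightarrow> g x - e * h \<le> g (x + h)"
    proof (intro exI[of _ "min \<delta> (b - x)"] conjI allI impI)
      fix h assume h: "0 < h \<and> h < min \<delta> (b - x)"
      have "\<bar>\<phi> (x + h) - \<phi> x - D\<phi> * h\<bar> \<le> e / 2 * h" using \<delta> h by auto
      moreover have "D\<phi> * h \<ge> - e / 2 * h" using mult_right_mono[OF \<open>D\<phi> \<ge> - e / 2\<close>, of h] h by simp
      moreover have "\<phi> x = g x" by (simp add: \<phi>_def g_def)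
      moreover have "F x + T (x + h) - T x - V (x + h) \<le> F (x + h) - V (x + h)" using T(3) h by auto
      then have "\<phi> (x + h) \<le> g (x + h)" unfolding \<phi>_def g_def by (intro mult_left_mono) auto
      ultimately show "g x - e * h \<le> g (x + h)" by linarith
    qed (use \<delta> x in auto)
  next
    fix x e :: real assume "x \<in> {a<..b}" "e > 0"
    then show "\<exists>\<delta>>0. \<forall>y. x - \<delta> < y \<and> y < x \<longrightarrow> g y \<le> g x + e"
      unfolding g_def using assms(1) cont_V mono_F by (rule powr_mult_mono_diff_left_upper_bound)
  qed
  then show ?thesis by (simp add: g_def)
qed

lemma has_real_derivative_linear_solution:
  fixes A \<kappa> t :: real
  assumes "t \<noteq> 0"
  shows "((\<lambda>u. A * u) has_real_derivative A * (1 - \<kappa>) + \<kappa> / t * (A * t)) (at t within S)"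
  using DERIV_cmult[OF DERIV_ident, of A t S] assms by (simp add: field_simps)

lemma powr_neg_mult_self:
  fixes a C \<kappa> :: real
  assumes "a > 0"
  shows "a powr (-\<kappa>) * (C * a) = C * a powr (1 - \<kappa>)"
  using assms by (simp add: powr_diff powr_minus field_simps)

lemma nonpos_if_le_powr_at_right_0:
  fixes x C \<kappa> b :: real
  assumes "\<kappa> < 1" "b > 0" "\<And>a. 0 < a \<Longrightarrow> a \<le> b \<Longrightarrow> x \<le> C * a powr (1 - \<kappa>)"
  shows "x \<le> 0"
proof (rule tendsto_le[OF trivial_limit_at_right_real _ tendsto_const])
  have "((\<lambda>a::real. a powr (1 - \<kappa>)) \<longlongrightarrow> 0) (at_right 0)"
    by (rule tendsto_zero_powrI[OF tendsto_ident_at tendsto_const])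
       (use assms(1) eventually_at_right_less[of 0] in \<open>auto elim: eventually_mono\<close>)
  then show "((\<lambda>a. C * a powr (1 - \<kappa>)) \<longlongrightarrow> 0) (at_right 0)" by (rule tendsto_mult_right_zero)
  show "eventually (\<lambda>a. x \<le> C * a powr (1 - \<kappa>)) (at_right 0)"
    by (rule eventually_at_rightI[of 0 b]) (use assms(2,3) in auto)
qed

section \<open>Pure birth processes\<close>

lemma (in finite_measure) measure_eq_AE_disjoint_Un:
  assumes "A \<in> sets M" "A1 \<in> sets M" "A2 \<in> sets M" "A1 \<inter> A2 = {}" "A1 \<union> A2 \<subseteq> A"
    and "AE \<omega> in M. \<omega> \<in> A \<longrightarrow> \<omega> \<in> A1 \<union> A2"
  shows "measure M A = measure M A1 + measure M A2"
proof -
  have "measure M A = measure M (A1 \<union> A2)"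
    using assms by (intro measure_eq_AE) auto
  also have "\<dots> = measure M A1 + measure M A2"
    using assms by (intro finite_measure_Union) auto
  finally show ?thesis .
qed

lemma (in finite_measure) abs_measure_diff_le:
  assumes "A \<in> sets M" "C \<in> sets M" "D \<in> sets M" "A \<subseteq> C \<union> D" "C \<subseteq> A \<union> D"
  shows "\<bar>measure M A - measure M C\<bar> \<le> measure M D"
proof -
  have "measure M A \<le> measure M (C \<union> D)" using assms by (intro finite_measure_mono) auto
  also have "\<dots> \<le> measure M C + measure M D" using assms by (intro measure_Un_le) auto
  finally have "measure M A \<le> measure M C + measure M D" .
  have "measure M C \<le> measure M (A \<union> D)" using assms by (intro finite_measure_mono) auto
  also have "\<dots> \<le> measure M A + measure M D" using assms by (intro measure_Un_le) auto
  finally show ?thesis using \<open>measure M A \<le> measure M C + measure M D\<close> by linarith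
qed

definition cumsum :: "(nat \<Rightarrow> real) \<Rightarrow> nat \<Rightarrow> real" where
  "cumsum c n = (\<Sum>k<n. c k)"

lemma cumsum_nonneg: "(\<And>k. 0 \<le> c k) \<Longrightarrow> 0 \<le> cumsum c n"
  unfolding cumsum_def by (simp add: sum_nonneg)

lemma cumsum_le: "(\<And>k. 0 \<le> c k) \<Longrightarrow> m \<le> n \<Longrightarrow> cumsum c m \<le> cumsum c n"
  unfolding cumsum_def by (rule sum_mono2) auto

lemma mono_cumsum: "(\<And>k. 0 \<le> c k) \<Longrightarrow> mono (cumsum c)"
  by (rule monoI) (rule cumsum_le)

lemma cumsum_one: "cumsum (\<lambda>_. 1) = real"
  by (simp add: cumsum_def fun_eq_iff)

lemma cumsum_odd: "cumsum (\<lambda>k. 2 * real k + 1) n = real n ^ 2"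
  unfolding cumsum_def by (induction n) (auto simp: power2_eq_square algebra_simps)

lemma sum_odd_times_eq:
  "(\<Sum>k<n. (2 * real k + 1) * real k * p k) = 2 * (\<Sum>k<n. real k ^ 2 * p k) + (\<Sum>k<n. real k * p k)"
  by (simp add: sum.distrib sum_distrib_left power2_eq_square algebra_simps)

lemma sum_Suc_le_eq_cumsum_min: "(\<Sum>k<N. c k * of_bool (Suc k \<le> y)) = cumsum c (min y N)"
  unfolding cumsum_def by (induction N) (auto simp: min_def le_Suc_eq)

lemma mono_cumsum_diff_min:
  assumes "\<And>k. 0 \<le> c k"
  shows "mono (\<lambda>y. cumsum c y - cumsum c (min y N))"
proof (rule monoI)
  fix x y :: nat assume "x \<le> y"
  then show "cumsum c x - cumsum c (min x N) \<le> cumsum c y - cumsum c (min y N)"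
    using cumsum_le[OF assms, of x y] cumsum_le[OF assms, of N x] cumsum_le[OF assms, of N y]
    by (cases "x \<le> N"; cases "y \<le> N") (auto simp: min_def)
qed

lemma sum_of_bool_eq:
  fixes f :: "nat \<Rightarrow> real"
  shows "(\<Sum>j<n. f j * of_bool (y = j)) = (if y < n then f y else 0)"
  by (induction n) (auto simp: less_Suc_eq)

locale pure_birth =
  fixes M :: "'a measure" and Y :: "real \<Rightarrow> 'a \<Rightarrow> nat" and lam :: "nat \<Rightarrow> real \<Rightarrow> real"
  assumes pure_birth_process: "pure_birth_process M Y lam"
begin

sublocale prob_space M
  using pure_birth_process by (simp add: pure_birth_process_def)

lemma measurable_Y: "t \<in> {0..1} \<Longrightarrow> Y t \<in> measurable M (count_space UNIV)"
  using pure_birth_process by (simp add: pure_birth_process_def)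

lemma AE_Y_0: "AE \<omega> in M. Y 0 \<omega> = 0"
  using pure_birth_process by (simp add: pure_birth_process_def)

lemma AE_Y_mono: "0 \<le> s \<Longrightarrow> s \<le> t \<Longrightarrow> t \<le> 1 \<Longrightarrow> AE \<omega> in M. Y s \<omega> \<le> Y t \<omega>"
  using pure_birth_process by (simp add: pure_birth_process_def)

lemma Y_stochastically_continuous:
  "t \<in> {0..1} \<Longrightarrow>
    ((\<lambda>u. measure M {\<omega>\<in>space M. Y u \<omega> \<noteq> Y t \<omega>}) \<longlongrightarrow> 0) (at t within {0..1})"
  using pure_birth_process by (simp add: pure_birth_process_def)

lemma Y_markov:
  assumes "0 \<le> s 0" "\<forall>i<n. s i < s (Suc i)" "s n < t" "t \<le> 1"
    "measure M {\<omega>\<in>space M. \<forall>i\<le>n. Y (s i) \<omega> = j i} > 0"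
  shows "cond_prob M {\<omega>\<in>space M. Y t \<omega> = k} {\<omega>\<in>space M. \<forall>i\<le>n. Y (s i) \<omega> = j i}
       = cond_prob M {\<omega>\<in>space M. Y t \<omega> = k} {\<omega>\<in>space M. Y (s n) \<omega> = j n}"
  using pure_birth_process assms unfolding pure_birth_process_def by blast

lemma Y_birth_rate:
  assumes "0 \<le> t" "t < 1" "measure M {\<omega>\<in>space M. Y t \<omega> = k} > 0"
  shows "((\<lambda>h. cond_prob M {\<omega>\<in>space M. Y (t + h) \<omega> = Suc k} {\<omega>\<in>space M. Y t \<omega> = k} / h)
           \<longlongrightarrow> lam k t) (at_right 0)"
    and "((\<lambda>h. (1 - cond_prob M {\<omega>\<in>space M. Y (t + h) \<omega> = k} {\<omega>\<in>space M. Y t \<omega> = k}) / h)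
           \<longlongrightarrow> lam k t) (at_right 0)"
  using pure_birth_process assms unfolding pure_birth_process_def by blast+

lemma sets_Y: "t \<in> {0..1} \<Longrightarrow> {\<omega>\<in>space M. P (Y t \<omega>)} \<in> sets M"
  using measurable_sets[OF measurable_Y, of t "{j. P j}"] by (simp add: vimage_def Int_def conj_commute)

lemma sets_Y_pair:
  assumes "t \<in> {0..1}" "u \<in> {0..1}"
  shows "{\<omega>\<in>space M. P (Y t \<omega>) (Y u \<omega>)} \<in> sets M"
proof -
  have "{\<omega>\<in>space M. P (Y t \<omega>) (Y u \<omega>)} =
      (\<Union>i. {\<omega>\<in>space M. Y t \<omega> = i} \<inter> {\<omega>\<in>space M. P i (Y u \<omega>)})"
    by auto
  then show ?thesis using assms sets_Y by auto
qed

lemma sets_restrict_Y: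
  "B \<in> sets M \<Longrightarrow> t \<in> {0..1} \<Longrightarrow> {\<omega>\<in>space M. \<omega> \<in> B \<and> P (Y t \<omega>)} \<in> sets M"
proof -
  assume "B \<in> sets M" "t \<in> {0..1}"
  moreover have "{\<omega>\<in>space M. \<omega> \<in> B \<and> P (Y t \<omega>)} = B \<inter> {\<omega>\<in>space M. P (Y t \<omega>)}" by auto
  ultimately show ?thesis using sets_Y by auto
qed

lemma sets_restrict_Y_pair:
  "B \<in> sets M \<Longrightarrow> t \<in> {0..1} \<Longrightarrow> u \<in> {0..1} \<Longrightarrow>
    {\<omega>\<in>space M. \<omega> \<in> B \<and> P (Y t \<omega>) (Y u \<omega>)} \<in> sets M"
proof -
  assume "B \<in> sets M" "t \<in> {0..1}" "u \<in> {0..1}"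
  moreover have "{\<omega>\<in>space M. \<omega> \<in> B \<and> P (Y t \<omega>) (Y u \<omega>)} = B \<inter> {\<omega>\<in>space M. P (Y t \<omega>) (Y u \<omega>)}"
    by auto
  ultimately show ?thesis using sets_Y_pair by auto
qed

definition p_eq :: "'a set \<Rightarrow> real \<Rightarrow> nat \<Rightarrow> real" where
  "p_eq B t j = measure M {\<omega>\<in>space M. \<omega> \<in> B \<and> Y t \<omega> = j}"

definition p_ge :: "'a set \<Rightarrow> real \<Rightarrow> nat \<Rightarrow> real" where
  "p_ge B t k = measure M {\<omega>\<in>space M. \<omega> \<in> B \<and> k \<le> Y t \<omega>}"

definition trans_prob :: "real \<Rightarrow> real \<Rightarrow> nat \<Rightarrow> nat \<Rightarrow> real" where
  "trans_prob t h i j = cond_prob M {\<omega>\<in>space M. Y (t + h) \<omega> = j} {\<omega>\<in>space M. Y t \<omega> = i}"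

text \<open>\<open>B\<close> does not disturb the transitions after time \<open>t\<^sub>0\<close>; by the Markov property this holds for
  the whole space and for events \<open>{Y s = j}\<close> with \<open>s \<le> t\<^sub>0\<close>.\<close>

definition factorizes_after :: "'a set \<Rightarrow> real \<Rightarrow> bool" where
  "factorizes_after B t\<^sub>0 \<longleftrightarrow> (\<forall>t h i j. t\<^sub>0 \<le> t \<longrightarrow> t < 1 \<longrightarrow> 0 < h \<longrightarrow> t + h \<le> 1 \<longrightarrow>
     measure M {\<omega>\<in>space M. \<omega> \<in> B \<and> Y t \<omega> = i \<and> Y (t + h) \<omega> = j} = p_eq B t i * trans_prob t h i j)"

lemma p_eq_nonneg: "p_eq B t k \<ge> 0"
  by (simp add: p_eq_def)

lemma p_eq_eq_0:
  assumes "t \<in> {0..1}" "measure M {\<omega>\<in>space M. Y t \<omega> = j} = 0"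
  shows "p_eq B t j = 0"
proof -
  have "p_eq B t j \<le> measure M {\<omega>\<in>space M. Y t \<omega> = j}"
    unfolding p_eq_def using assms(1) by (intro finite_measure_mono sets_Y) auto
  with assms(2) p_eq_nonneg[of B t j] show ?thesis by simp
qed

lemma p_ge_Suc: "B \<in> sets M \<Longrightarrow> t \<in> {0..1} \<Longrightarrow> p_ge B t k = p_ge B t (Suc k) + p_eq B t k"
  unfolding p_ge_def p_eq_def by (rule measure_eq_AE_disjoint_Un) (auto intro!: sets_restrict_Y)

lemma p_ge_antimono: "B \<in> sets M \<Longrightarrow> t \<in> {0..1} \<Longrightarrow> k \<le> k' \<Longrightarrow> p_ge B t k' \<le> p_ge B t k"
  unfolding p_ge_def by (intro finite_measure_mono sets_restrict_Y) auto

lemma factorizes_after_space: "factorizes_after (space M) 0"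
  unfolding factorizes_after_def
proof (intro allI impI)
  fix t h :: real and i j :: nat
  assume t: "0 \<le> t" "t < 1" "0 < h" "t + h \<le> 1"
  let ?A = "{\<omega>\<in>space M. Y t \<omega> = i}"
  let ?L = "{\<omega>\<in>space M. \<omega> \<in> space M \<and> Y t \<omega> = i \<and> Y (t + h) \<omega> = j}"
  have "?A \<in> sets M" using t by (intro sets_Y) auto
  have L: "?L = {\<omega>\<in>space M. Y (t + h) \<omega> = j} \<inter> ?A" by auto
  show "measure M ?L = p_eq (space M) t i * trans_prob t h i j"
  proof (cases "measure M ?A = 0")
    case True
    then have "measure M ?L = 0"
      using finite_measure_mono[of ?L ?A] \<open>?A \<in> sets M\<close> by (auto simp: measure_le_0_iff)
    with True show ?thesis by (simp add: p_eq_def)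
  next
    case False
    then show ?thesis unfolding L by (simp add: p_eq_def trans_prob_def cond_prob_def)
  qed
qed

lemma factorizes_after_level:
  assumes "0 \<le> s" "s \<le> 1"
  shows "factorizes_after {\<omega>\<in>space M. Y s \<omega> = j\<^sub>0} s"
  unfolding factorizes_after_def
proof (intro allI impI)
  fix t h :: real and i j :: nat
  assume t: "s \<le> t" "t < 1" "0 < h" "t + h \<le> 1"
  let ?B = "{\<omega>\<in>space M. Y s \<omega> = j\<^sub>0}"
  let ?A = "{\<omega>\<in>space M. \<omega> \<in> ?B \<and> Y t \<omega> = i}"
  let ?L = "{\<omega>\<in>space M. \<omega> \<in> ?B \<and> Y t \<omega> = i \<and> Y (t + h) \<omega> = j}"
  have "?A \<in> sets M" using t assms by (intro sets_restrict_Y sets_Y) auto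
  show "measure M ?L = p_eq ?B t i * trans_prob t h i j"
  proof (cases "measure M ?A = 0")
    case True
    then have "measure M ?L = 0"
      using finite_measure_mono[of ?L ?A] \<open>?A \<in> sets M\<close> by (auto simp: measure_le_0_iff)
    with True show ?thesis by (simp add: p_eq_def)
  next
    case False
    have "cond_prob M {\<omega>\<in>space M. Y (t + h) \<omega> = j} ?A = trans_prob t h i j"
    proof (cases "t = s")
      case True
      have "i = j\<^sub>0"
      proof (rule ccontr)
        assume "i \<noteq> j\<^sub>0"
        with True have "?A = {}" by auto
        with False show False by (metis measure_empty)
      qed
      with True have "?A = {\<omega>\<in>space M. Y t \<omega> = i}" by auto
      then show ?thesis by (simp add: trans_prob_def)
    next
      case False
      with t have "s < t" by simp
      define sf where "sf n = (if n = 0 then s else t)" for n :: nat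
      define jf where "jf n = (if n = 0 then j\<^sub>0 else i)" for n :: nat
      have A: "{\<omega>\<in>space M. \<forall>n\<le>Suc 0. Y (sf n) \<omega> = jf n} = ?A"
        by (auto simp: sf_def jf_def le_Suc_eq)
      show ?thesis
        using Y_markov[of sf "Suc 0" "t + h" jf j] \<open>s < t\<close> t assms \<open>measure M ?A \<noteq> 0\<close>
        unfolding A trans_prob_def by (simp add: sf_def jf_def zero_less_measure_iff)
    qed
    moreover have "{\<omega>\<in>space M. Y (t + h) \<omega> = j} \<inter> ?A = ?L" by auto
    ultimately show ?thesis using False by (simp add: cond_prob_def p_eq_def field_simps)
  qed
qed

lemma measure_leave_level:
  assumes B: "B \<in> sets M" "factorizes_after B t\<^sub>0"
    and t: "0 \<le> t\<^sub>0" "t\<^sub>0 \<le> t" "t < 1" and h: "0 < h" "t + h \<le> 1"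
  shows "measure M {\<omega>\<in>space M. \<omega> \<in> B \<and> Y t \<omega> = j \<and> Suc j \<le> Y (t + h) \<omega>}
       = p_eq B t j * (1 - trans_prob t h j j)"
proof -
  have t01: "t \<in> {0..1}" "t + h \<in> {0..1}" using t h by auto
  have "AE \<omega> in M. Y t \<omega> \<le> Y (t + h) \<omega>" using AE_Y_mono[of t "t + h"] t h by auto
  then have "p_eq B t j = measure M {\<omega>\<in>space M. \<omega> \<in> B \<and> Y t \<omega> = j \<and> Y (t + h) \<omega> = j}
      + measure M {\<omega>\<in>space M. \<omega> \<in> B \<and> Y t \<omega> = j \<and> Suc j \<le> Y (t + h) \<omega>}"
    unfolding p_eq_def
    by (intro measure_eq_AE_disjoint_Un)
       (auto elim!: eventually_mono intro!: sets_restrict_Y sets_restrict_Y_pair B t01)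
  moreover have "measure M {\<omega>\<in>space M. \<omega> \<in> B \<and> Y t \<omega> = j \<and> Y (t + h) \<omega> = j} = p_eq B t j * trans_prob t h j j"
    using B t h unfolding factorizes_after_def by blast
  ultimately show ?thesis by (simp add: algebra_simps)
qed

lemma measure_skip_level:
  assumes B: "B \<in> sets M" "factorizes_after B t\<^sub>0"
    and t: "0 \<le> t\<^sub>0" "t\<^sub>0 \<le> t" "t < 1" and h: "0 < h" "t + h \<le> 1"
  shows "measure M {\<omega>\<in>space M. \<omega> \<in> B \<and> Y t \<omega> = j \<and> Suc (Suc j) \<le> Y (t + h) \<omega>}
       = p_eq B t j * (1 - trans_prob t h j j - trans_prob t h j (Suc j))"
proof -
  have t01: "t \<in> {0..1}" "t + h \<in> {0..1}" using t h by auto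
  have "measure M {\<omega>\<in>space M. \<omega> \<in> B \<and> Y t \<omega> = j \<and> Suc j \<le> Y (t + h) \<omega>} =
        measure M {\<omega>\<in>space M. \<omega> \<in> B \<and> Y t \<omega> = j \<and> Y (t + h) \<omega> = Suc j}
        + measure M {\<omega>\<in>space M. \<omega> \<in> B \<and> Y t \<omega> = j \<and> Suc (Suc j) \<le> Y (t + h) \<omega>}"
    by (rule measure_eq_AE_disjoint_Un) (use B t01 in \<open>auto intro!: sets_restrict_Y_pair\<close>)
  moreover have "measure M {\<omega>\<in>space M. \<omega> \<in> B \<and> Y t \<omega> = j \<and> Y (t + h) \<omega> = Suc j}
      = p_eq B t j * trans_prob t h j (Suc j)"
    using B t h unfolding factorizes_after_def by blast
  ultimately show ?thesis using measure_leave_level[OF assms, of j] by (simp add: algebra_simps)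
qed

lemma p_ge_increment:
  assumes B: "B \<in> sets M" and t: "0 \<le> t" and h: "0 < h" "t + h \<le> 1"
  shows "p_ge B (t + h) k - p_ge B t k
       = (\<Sum>j<k. measure M {\<omega>\<in>space M. \<omega> \<in> B \<and> Y t \<omega> = j \<and> k \<le> Y (t + h) \<omega>})"
proof -
  have t01: "t \<in> {0..1}" "t + h \<in> {0..1}" using t h by auto
  have mono: "AE \<omega> in M. Y t \<omega> \<le> Y (t + h) \<omega>" using AE_Y_mono[of t "t + h"] t h by auto
  have "p_ge B (t + h) k = measure M {\<omega>\<in>space M. \<omega> \<in> B \<and> k \<le> Y t \<omega> \<and> k \<le> Y (t + h) \<omega>}
        + measure M {\<omega>\<in>space M. \<omega> \<in> B \<and> Y t \<omega> < k \<and> k \<le> Y (t + h) \<omega>}"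
    unfolding p_ge_def
    by (rule measure_eq_AE_disjoint_Un) (use B t01 in \<open>auto intro!: sets_restrict_Y sets_restrict_Y_pair\<close>)
  moreover have "measure M {\<omega>\<in>space M. \<omega> \<in> B \<and> k \<le> Y t \<omega> \<and> k \<le> Y (t + h) \<omega>} = p_ge B t k"
    unfolding p_ge_def using mono
    by (intro measure_eq_AE) (auto elim!: eventually_mono intro!: sets_restrict_Y sets_restrict_Y_pair B t01)
  moreover have "{\<omega>\<in>space M. \<omega> \<in> B \<and> Y t \<omega> < k \<and> k \<le> Y (t + h) \<omega>}
      = (\<Union>j\<in>{..<k}. {\<omega>\<in>space M. \<omega> \<in> B \<and> Y t \<omega> = j \<and> k \<le> Y (t + h) \<omega>})"
    by auto
  moreover have "measure M \<dots> = (\<Sum>j<k. measure M {\<omega>\<in>space M. \<omega> \<in> B \<and> Y t \<omega> = j \<and> k \<le> Y (t + h) \<omega>})"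
    by (rule finite_measure_finite_Union)
       (use B t01 in \<open>auto intro!: sets_restrict_Y_pair simp: disjoint_family_on_def\<close>)
  ultimately show ?thesis by simp
qed

lemma eventually_right_step: "t < 1 \<Longrightarrow> eventually (\<lambda>h. 0 < h \<and> t + h \<le> 1) (at_right (0::real))"
  unfolding eventually_at_right_field by (intro exI[of _ "1 - t"]) auto

lemma leave_level_rate:
  assumes B: "B \<in> sets M" "factorizes_after B t\<^sub>0" and t: "0 \<le> t\<^sub>0" "t\<^sub>0 \<le> t" "t < 1"
  shows "((\<lambda>h. measure M {\<omega>\<in>space M. \<omega> \<in> B \<and> Y t \<omega> = k \<and> Suc k \<le> Y (t + h) \<omega>} / h)
           \<longlongrightarrow> lam k t * p_eq B t k) (at_right 0)"
proof -
  have ev: "eventually (\<lambda>h. p_eq B t k * ((1 - trans_prob t h k k) / h)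
      = measure M {\<omega>\<in>space M. \<omega> \<in> B \<and> Y t \<omega> = k \<and> Suc k \<le> Y (t + h) \<omega>} / h) (at_right 0)"
    using eventually_right_step[OF t(3)] by eventually_elim (simp add: measure_leave_level[OF B t])
  have "((\<lambda>h. p_eq B t k * ((1 - trans_prob t h k k) / h)) \<longlongrightarrow> p_eq B t k * lam k t) (at_right 0)"
  proof (cases "measure M {\<omega>\<in>space M. Y t \<omega> = k} = 0")
    case True
    then show ?thesis using p_eq_eq_0 t by simp
  next
    case False
    then show ?thesis using Y_birth_rate(2)[of t k] t unfolding trans_prob_def
      by (intro tendsto_mult_left) (auto simp: zero_less_measure_iff)
  qed
  then show ?thesis using tendsto_cong[OF ev] by (simp add: mult.commute)
qed

lemma skip_level_rate:
  assumes B: "B \<in> sets M" "factorizes_after B t\<^sub>0" and t: "0 \<le> t\<^sub>0" "t\<^sub>0 \<le> t" "t < 1"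
  shows "((\<lambda>h. measure M {\<omega>\<in>space M. \<omega> \<in> B \<and> Y t \<omega> = j \<and> Suc (Suc j) \<le> Y (t + h) \<omega>} / h)
           \<longlongrightarrow> 0) (at_right 0)"
proof -
  have ev: "eventually (\<lambda>h. p_eq B t j * ((1 - trans_prob t h j j) / h - trans_prob t h j (Suc j) / h)
      = measure M {\<omega>\<in>space M. \<omega> \<in> B \<and> Y t \<omega> = j \<and> Suc (Suc j) \<le> Y (t + h) \<omega>} / h) (at_right 0)"
    using eventually_right_step[OF t(3)]
  proof eventually_elim
    case (elim h)
    have "p_eq B t j * ((1 - trans_prob t h j j) / h - trans_prob t h j (Suc j) / h)
        = p_eq B t j * (1 - trans_prob t h j j - trans_prob t h j (Suc j)) / h"
      using elim by (simp add: field_simps)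
    also have "\<dots> = measure M {\<omega>\<in>space M. \<omega> \<in> B \<and> Y t \<omega> = j \<and> Suc (Suc j) \<le> Y (t + h) \<omega>} / h"
      using measure_skip_level[OF B t, of h j] elim by simp
    finally show ?case .
  qed
  have "((\<lambda>h. p_eq B t j * ((1 - trans_prob t h j j) / h - trans_prob t h j (Suc j) / h))
      \<longlongrightarrow> p_eq B t j * (lam j t - lam j t)) (at_right 0)"
  proof (cases "measure M {\<omega>\<in>space M. Y t \<omega> = j} = 0")
    case True
    then show ?thesis using p_eq_eq_0 t by simp
  next
    case False
    then show ?thesis using Y_birth_rate[of t j] t unfolding trans_prob_def
      by (intro tendsto_mult_left tendsto_diff) (auto simp: zero_less_measure_iff)
  qed
  then show ?thesis using tendsto_cong[OF ev] by simp
qed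

lemma jump_over_level_rate:
  assumes B: "B \<in> sets M" "factorizes_after B t\<^sub>0" and t: "0 \<le> t\<^sub>0" "t\<^sub>0 \<le> t" "t < 1"
    and "Suc j < m"
  shows "((\<lambda>h. measure M {\<omega>\<in>space M. \<omega> \<in> B \<and> Y t \<omega> = j \<and> m \<le> Y (t + h) \<omega>} / h) \<longlongrightarrow> 0) (at_right 0)"
proof (rule tendsto_sandwich[OF _ _ tendsto_const skip_level_rate[OF B t]])
  show "eventually (\<lambda>h. 0 \<le> measure M {\<omega>\<in>space M. \<omega> \<in> B \<and> Y t \<omega> = j \<and> m \<le> Y (t + h) \<omega>} / h) (at_right 0)"
    using eventually_right_step[OF t(3)] by eventually_elim auto
  show "eventually (\<lambda>h. measure M {\<omega>\<in>space M. \<omega> \<in> B \<and> Y t \<omega> = j \<and> m \<le> Y (t + h) \<omega>} / h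
      \<le> measure M {\<omega>\<in>space M. \<omega> \<in> B \<and> Y t \<omega> = j \<and> Suc (Suc j) \<le> Y (t + h) \<omega>} / h) (at_right 0)"
    using eventually_right_step[OF t(3)]
  proof eventually_elim
    case (elim h)
    then have "t \<in> {0..1}" "t + h \<in> {0..1}" using t by auto
    then have "measure M {\<omega>\<in>space M. \<omega> \<in> B \<and> Y t \<omega> = j \<and> m \<le> Y (t + h) \<omega>}
        \<le> measure M {\<omega>\<in>space M. \<omega> \<in> B \<and> Y t \<omega> = j \<and> Suc (Suc j) \<le> Y (t + h) \<omega>}"
      using \<open>Suc j < m\<close> by (intro finite_measure_mono sets_restrict_Y_pair B) auto
    with elim show ?case by (simp add: divide_right_mono)
  qed
qed

text \<open>The forward equation \<open>d/dt P(B, Y t > k) = \<lambda>\<^sub>k(t) P(B, Y t = k)\<close>, as a right derivative: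
  of the increment, only the jump out of level \<open>k\<close> contributes at first order.\<close>

lemma p_ge_right_derivative:
  assumes B: "B \<in> sets M" "factorizes_after B t\<^sub>0" and t: "0 \<le> t\<^sub>0" "t\<^sub>0 \<le> t" "t < 1"
  shows "((\<lambda>u. p_ge B u (Suc k)) has_real_derivative lam k t * p_eq B t k) (at t within {t..})"
proof -
  define r where "r j h = measure M {\<omega>\<in>space M. \<omega> \<in> B \<and> Y t \<omega> = j \<and> Suc k \<le> Y (t + h) \<omega>}" for j h
  have "((\<lambda>h. r j h / h) \<longlongrightarrow> (if j = k then lam k t * p_eq B t k else 0)) (at_right 0)"
    if "j < Suc k" for j
    using leave_level_rate[OF B t] jump_over_level_rate[OF B t, of j "Suc k"] that
    unfolding r_def by (cases "j = k") auto
  then have "((\<lambda>h. \<Sum>j<Suc k. r j h / h) \<longlongrightarrow> (\<Sum>j<Suc k. if j = k then lam k t * p_eq B t k else 0))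
      (at_right 0)"
    by (intro tendsto_sum) auto
  then have "((\<lambda>h. \<Sum>j<Suc k. r j h / h) \<longlongrightarrow> lam k t * p_eq B t k) (at_right 0)" by simp
  moreover have "eventually (\<lambda>h. (\<Sum>j<Suc k. r j h / h)
      = (p_ge B (h + t) (Suc k) - p_ge B t (Suc k)) / (h + t - t)) (at_right 0)"
    using eventually_right_step[OF t(3)]
  proof eventually_elim
    case (elim h)
    then have "p_ge B (t + h) (Suc k) - p_ge B t (Suc k) = (\<Sum>j<Suc k. r j h)"
      unfolding r_def using B t by (intro p_ge_increment) auto
    then show ?case by (simp add: sum_divide_distrib[symmetric] add.commute)
  qed
  ultimately show ?thesis
    unfolding has_field_derivative_iff at_within_Ici_at_right filterlim_at_right_to_0[of _ _ t]
    using tendsto_cong by fastforce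
qed

lemma continuous_on_if_bounded_by_jump_prob:
  assumes "\<And>u t. u \<in> {0..1} \<Longrightarrow> t \<in> {0..1} \<Longrightarrow>
             \<bar>f u - f t\<bar> \<le> measure M {\<omega>\<in>space M. Y u \<omega> \<noteq> Y t \<omega>}"
  shows "continuous_on {0..1} f"
  unfolding continuous_on_def
proof
  fix t :: real assume t: "t \<in> {0..1}"
  have "((\<lambda>u. f u - f t) \<longlongrightarrow> 0) (at t within {0..1})"
    by (rule Lim_null_comparison[OF _ Y_stochastically_continuous[OF t]])
       (use assms t in \<open>auto simp: eventually_at_filter\<close>)
  then have "((\<lambda>u. (f u - f t) + f t) \<longlongrightarrow> 0 + f t) (at t within {0..1})"
    by (intro tendsto_add) auto
  then show "(f \<longlongrightarrow> f t) (at t within {0..1})" by simp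
qed

lemma continuous_on_p_ge: "B \<in> sets M \<Longrightarrow> continuous_on {0..1} (\<lambda>u. p_ge B u k)"
  by (rule continuous_on_if_bounded_by_jump_prob, unfold p_ge_def, rule abs_measure_diff_le)
     (auto intro!: sets_restrict_Y sets_Y_pair)

definition expect_on :: "'a set \<Rightarrow> (nat \<Rightarrow> real) \<Rightarrow> real \<Rightarrow> real" where
  "expect_on B \<phi> t = (\<integral>\<omega>. indicator B \<omega> * \<phi> (Y t \<omega>) \<partial>M)"

lemma borel_measurable_restrict_Y:
  fixes \<phi> :: "nat \<Rightarrow> real"
  assumes "B \<in> sets M" "t \<in> {0..1}"
  shows "(\<lambda>\<omega>. indicator B \<omega> * \<phi> (Y t \<omega>)) \<in> borel_measurable M"
  using assms measurable_compose[OF measurable_Y[OF assms(2)], of \<phi> borel] by simp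

lemma integrable_restrict_Y_bounded:
  fixes \<phi> :: "nat \<Rightarrow> real"
  assumes "B \<in> sets M" "t \<in> {0..1}" "\<And>y. \<bar>\<phi> y\<bar> \<le> C"
  shows "integrable M (\<lambda>\<omega>. indicator B \<omega> * \<phi> (Y t \<omega>))"
proof (rule integrable_const_bound[where B = C])
  show "AE \<omega> in M. norm (indicator B \<omega> * \<phi> (Y t \<omega>)) \<le> C"
    using assms(3) by (intro AE_I2) (auto simp: indicator_def abs_mult intro: order_trans[OF _ assms(3)])
qed (use borel_measurable_restrict_Y assms in auto)

lemma expect_on_of_bool:
  assumes "B \<in> sets M" "t \<in> {0..1}"
  shows "expect_on B (\<lambda>y. of_bool (P y)) t = measure M {\<omega>\<in>space M. \<omega> \<in> B \<and> P (Y t \<omega>)}"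
proof -
  have "expect_on B (\<lambda>y. of_bool (P y)) t = (\<integral>\<omega>. indicator {\<omega>\<in>space M. \<omega> \<in> B \<and> P (Y t \<omega>)} \<omega> \<partial>M)"
    unfolding expect_on_def by (intro Bochner_Integration.integral_cong) (auto simp: indicator_def)
  then show ?thesis by (simp add: Int_absorb2 subset_iff)
qed

lemma expect_on_cmult: "expect_on B (\<lambda>y. c * f y) t = c * expect_on B f t"
  unfolding expect_on_def by (simp add: mult.left_commute)

lemma expect_on_sum:
  assumes "\<And>i. i \<in> S \<Longrightarrow> integrable M (\<lambda>\<omega>. indicator B \<omega> * f i (Y t \<omega>))"
  shows "expect_on B (\<lambda>y. \<Sum>i\<in>S. f i y) t = (\<Sum>i\<in>S. expect_on B (f i) t)"
  unfolding expect_on_def sum_distrib_left by (rule Bochner_Integration.integral_sum) (use assms in auto)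

lemma expect_on_diff:
  assumes "integrable M (\<lambda>\<omega>. indicator B \<omega> * \<phi> (Y t \<omega>))"
    "integrable M (\<lambda>\<omega>. indicator B \<omega> * \<psi> (Y t \<omega>))"
  shows "expect_on B (\<lambda>y. \<phi> y - \<psi> y) t = expect_on B \<phi> t - expect_on B \<psi> t"
  unfolding expect_on_def using Bochner_Integration.integral_diff[OF assms] by (simp add: algebra_simps)

lemma expect_on_mono:
  assumes "integrable M (\<lambda>\<omega>. indicator B \<omega> * \<phi> (Y t \<omega>))"
    "integrable M (\<lambda>\<omega>. indicator B \<omega> * \<psi> (Y t \<omega>))" "\<And>y. \<phi> y \<le> \<psi> y"
  shows "expect_on B \<phi> t \<le> expect_on B \<psi> t"
  unfolding expect_on_def by (rule integral_mono[OF assms(1,2)]) (auto simp: indicator_def assms(3))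

lemma expect_on_nonneg: "(\<And>y. 0 \<le> \<phi> y) \<Longrightarrow> 0 \<le> expect_on B \<phi> t"
  unfolding expect_on_def by (intro Bochner_Integration.integral_nonneg) (auto simp: indicator_def)

lemma expect_on_mono_time:
  assumes "B \<in> sets M" "0 \<le> t" "t \<le> t'" "t' \<le> 1" "mono \<phi>"
    "integrable M (\<lambda>\<omega>. indicator B \<omega> * \<phi> (Y t \<omega>))" "integrable M (\<lambda>\<omega>. indicator B \<omega> * \<phi> (Y t' \<omega>))"
  shows "expect_on B \<phi> t \<le> expect_on B \<phi> t'"
  unfolding expect_on_def
proof (rule integral_mono_AE[OF assms(6,7)])
  show "AE \<omega> in M. indicator B \<omega> * \<phi> (Y t \<omega>) \<le> indicator B \<omega> * \<phi> (Y t' \<omega>)"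
    using AE_Y_mono[OF assms(2,3,4)] by eventually_elim (auto intro!: mult_left_mono monoD[OF assms(5)])
qed

lemma sum_p_eq_eq_expect_on:
  assumes "B \<in> sets M" "t \<in> {0..1}"
  shows "(\<Sum>k<N. \<phi> k * p_eq B t k) = expect_on B (\<lambda>y. if y < N then \<phi> y else 0) t"
proof -
  have "expect_on B (\<lambda>y. if y < N then \<phi> y else 0) t = expect_on B (\<lambda>y. \<Sum>k<N. \<phi> k * of_bool (y = k)) t"
    by (simp add: sum_of_bool_eq)
  also have "\<dots> = (\<Sum>k<N. \<phi> k * expect_on B (\<lambda>y. of_bool (y = k)) t)"
    by (subst expect_on_sum) (auto intro!: integrable_restrict_Y_bounded[OF assms, of _ "\<bar>\<phi> _\<bar>"]
                                   simp: abs_mult expect_on_cmult)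
  finally show ?thesis using assms by (simp add: expect_on_of_bool p_eq_def)
qed

lemma expect_on_eq_suminf:
  assumes B: "B \<in> sets M" and t: "t \<in> {0..1}" and nonneg: "\<And>j. \<phi> j \<ge> 0"
    and summable: "summable (\<lambda>j. \<phi> j * p_eq B t j)"
  shows "integrable M (\<lambda>\<omega>. indicator B \<omega> * \<phi> (Y t \<omega>))"
    and "expect_on B \<phi> t = (\<Sum>j. \<phi> j * p_eq B t j)"
proof -
  define f where "f n \<omega> = indicator B \<omega> * (if Y t \<omega> < n then \<phi> (Y t \<omega>) else 0)" for n \<omega>
  have "integrable M (f n)" for n
    unfolding f_def
    by (rule integrable_restrict_Y_bounded[OF B t, of _ "\<Sum>j<n. \<phi> j"])
       (auto simp: nonneg intro: member_le_sum sum_nonneg)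
  moreover have "AE \<omega> in M. mono (\<lambda>n. f n \<omega>)" "\<And>n. AE \<omega> in M. 0 \<le> f n \<omega>"
    by (auto intro!: AE_I2 monoI simp: f_def indicator_def nonneg)
  moreover have "AE \<omega> in M. (\<lambda>n. f n \<omega>) \<longlonglongrightarrow> indicator B \<omega> * \<phi> (Y t \<omega>)"
  proof (intro AE_I2 tendsto_eventually)
    fix \<omega>
    show "eventually (\<lambda>n. f n \<omega> = indicator B \<omega> * \<phi> (Y t \<omega>)) sequentially"
      using eventually_gt_at_top[of "Y t \<omega>"] by eventually_elim (simp add: f_def)
  qed
  moreover have "(\<lambda>n. integral\<^sup>L M (f n)) \<longlonglongrightarrow> (\<Sum>j. \<phi> j * p_eq B t j)"
    using summable_LIMSEQ[OF summable] sum_p_eq_eq_expect_on[OF B t]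
    by (simp add: f_def[abs_def] expect_on_def)
  ultimately have "integrable M (\<lambda>\<omega>. indicator B \<omega> * \<phi> (Y t \<omega>)) \<and>
      integral\<^sup>L M (\<lambda>\<omega>. indicator B \<omega> * \<phi> (Y t \<omega>)) = (\<Sum>j. \<phi> j * p_eq B t j)"
    using integral_monotone_convergence_nonneg[OF _ _ _ _ _ borel_measurable_restrict_Y[OF B t]] by blast
  then show "integrable M (\<lambda>\<omega>. indicator B \<omega> * \<phi> (Y t \<omega>))" "expect_on B \<phi> t = (\<Sum>j. \<phi> j * p_eq B t j)"
    unfolding expect_on_def by blast+
qed

lemma p_ge_mono_time:
  assumes "B \<in> sets M" "0 \<le> t" "t \<le> t'" "t' \<le> 1"
  shows "p_ge B t k \<le> p_ge B t' k"
proof -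
  have "expect_on B (\<lambda>y. of_bool (k \<le> y)) t \<le> expect_on B (\<lambda>y. of_bool (k \<le> y)) t'"
    using assms by (intro expect_on_mono_time integrable_restrict_Y_bounded[of _ _ _ 1]) (auto intro: monoI)
  then show ?thesis using assms by (simp add: expect_on_of_bool p_ge_def)
qed

lemma expect_on_space: "expect_on (space M) \<phi> t = (\<integral>\<omega>. \<phi> (Y t \<omega>) \<partial>M)"
  unfolding expect_on_def by (intro Bochner_Integration.integral_cong) auto

subsection \<open>Truncated moments\<close>

definition trunc_moment :: "(nat \<Rightarrow> real) \<Rightarrow> nat \<Rightarrow> 'a set \<Rightarrow> real \<Rightarrow> real" where
  "trunc_moment c N B t = (\<Sum>k<N. c k * p_ge B t (Suc k))"

definition trunc_rate :: "(nat \<Rightarrow> real) \<Rightarrow> nat \<Rightarrow> 'a set \<Rightarrow> real \<Rightarrow> real" where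
  "trunc_rate c N B t = (\<Sum>k<N. c k * (lam k t * p_eq B t k))"

lemma trunc_moment_eq_expect_on:
  assumes "B \<in> sets M" "t \<in> {0..1}"
  shows "trunc_moment c N B t = expect_on B (\<lambda>y. cumsum c (min y N)) t"
proof -
  have "expect_on B (\<lambda>y. cumsum c (min y N)) t = (\<Sum>k<N. c k * expect_on B (\<lambda>y. of_bool (Suc k \<le> y)) t)"
    unfolding sum_Suc_le_eq_cumsum_min[symmetric]
    by (subst expect_on_sum) (auto intro!: integrable_restrict_Y_bounded[OF assms, of _ "\<bar>c _\<bar>"]
                                   simp: abs_mult expect_on_cmult)
  then show ?thesis using assms by (simp add: trunc_moment_def expect_on_of_bool p_ge_def)
qed

lemma trunc_moment_right_derivative:
  assumes "B \<in> sets M" "factorizes_after B t\<^sub>0" "0 \<le> t\<^sub>0" "t\<^sub>0 \<le> t" "t < 1"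
  shows "((\<lambda>u. trunc_moment c N B u) has_real_derivative trunc_rate c N B t) (at t within {t..})"
  unfolding trunc_moment_def trunc_rate_def
  by (intro DERIV_sum DERIV_cmult p_ge_right_derivative[OF assms])

lemma continuous_on_trunc_moment: "B \<in> sets M \<Longrightarrow> continuous_on {0..1} (\<lambda>u. trunc_moment c N B u)"
  unfolding trunc_moment_def by (intro continuous_intros continuous_on_p_ge)

lemma trunc_moment_le:
  assumes "B \<in> sets M" "t \<in> {0..1}" "\<And>k. 0 \<le> c k"
  shows "trunc_moment c N B t \<le> cumsum c N * p_ge B t (Suc 0)"
  unfolding trunc_moment_def cumsum_def sum_distrib_right
  using assms by (intro sum_mono mult_left_mono p_ge_antimono) auto

lemma sum_cumsum_p_eq_le_trunc_moment:
  assumes "B \<in> sets M" "t \<in> {0..1}" "\<And>k. 0 \<le> c k"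
  shows "(\<Sum>k<N. cumsum c k * p_eq B t k) \<le> trunc_moment c N B t"
proof -
  have nonneg: "0 \<le> cumsum c n" and le: "m \<le> n \<Longrightarrow> cumsum c m \<le> cumsum c n" for m n
    using assms(3) by (auto intro: cumsum_nonneg cumsum_le)
  show ?thesis
    unfolding sum_p_eq_eq_expect_on[OF assms(1,2)] trunc_moment_eq_expect_on[OF assms(1,2)]
  proof (rule expect_on_mono)
    show "integrable M (\<lambda>\<omega>. indicator B \<omega> * (if Y t \<omega> < N then cumsum c (Y t \<omega>) else 0))"
      by (rule integrable_restrict_Y_bounded[OF assms(1,2), of _ "cumsum c N"]) (simp add: nonneg le)
    show "integrable M (\<lambda>\<omega>. indicator B \<omega> * cumsum c (min (Y t \<omega>) N))"
      by (rule integrable_restrict_Y_bounded[OF assms(1,2), of _ "cumsum c N"]) (simp add: nonneg le)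
  qed (simp add: nonneg)
qed

lemma sum_p_eq_le_expect_on:
  assumes "B \<in> sets M" "t \<in> {0..1}" "\<And>j. 0 \<le> \<phi> j"
    and "integrable M (\<lambda>\<omega>. indicator B \<omega> * \<phi> (Y t \<omega>))"
  shows "(\<Sum>k<N. \<phi> k * p_eq B t k) \<le> expect_on B \<phi> t"
  unfolding sum_p_eq_eq_expect_on[OF assms(1,2)]
proof (rule expect_on_mono[OF _ assms(4)])
  have "\<phi> y \<le> (\<Sum>k<N. \<phi> k)" if "y < N" for y
    using that assms(3) by (intro member_le_sum) auto
  then show "integrable M (\<lambda>\<omega>. indicator B \<omega> * (if Y t \<omega> < N then \<phi> (Y t \<omega>) else 0))"
    by (intro integrable_restrict_Y_bounded[OF assms(1,2), of _ "\<Sum>k<N. \<phi> k"])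
       (simp add: assms(3) sum_nonneg)
qed (simp add: assms(3))

lemma partial_sums_tendsto_expect_on:
  assumes "B \<in> sets M" "t \<in> {0..1}" "\<And>j. 0 \<le> \<phi> j"
    and "integrable M (\<lambda>\<omega>. indicator B \<omega> * \<phi> (Y t \<omega>))"
  shows "(\<lambda>N. \<Sum>k<N. \<phi> k * p_eq B t k) \<longlonglongrightarrow> expect_on B \<phi> t"
proof -
  have summable: "summable (\<lambda>k. \<phi> k * p_eq B t k)"
    using sum_p_eq_le_expect_on[OF assms]
    by (intro summableI_nonneg_bounded) (simp_all add: assms(3) p_eq_nonneg)
  then show ?thesis
    unfolding expect_on_eq_suminf(2)[OF assms(1-3) summable] by (rule summable_LIMSEQ)
qed

lemma integrable_if_trunc_moment_bounded:
  assumes "B \<in> sets M" "t \<in> {0..1}" "\<And>k. 0 \<le> c k" "\<And>N. trunc_moment c N B t \<le> K"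
  shows "integrable M (\<lambda>\<omega>. indicator B \<omega> * cumsum c (Y t \<omega>))"
    and "expect_on B (cumsum c) t \<le> K"
proof -
  have nonneg: "0 \<le> cumsum c n" for n using assms(3) by (rule cumsum_nonneg)
  have partial: "(\<Sum>k<N. cumsum c k * p_eq B t k) \<le> K" for N
    using order_trans[OF sum_cumsum_p_eq_le_trunc_moment[OF assms(1-3)] assms(4)] .
  then have summable: "summable (\<lambda>k. cumsum c k * p_eq B t k)"
    by (intro summableI_nonneg_bounded) (simp_all add: nonneg p_eq_nonneg)
  show "integrable M (\<lambda>\<omega>. indicator B \<omega> * cumsum c (Y t \<omega>))"
    by (rule expect_on_eq_suminf(1)[OF assms(1,2) nonneg summable])
  show "expect_on B (cumsum c) t \<le> K"
    using expect_on_eq_suminf(2)[OF assms(1,2) nonneg summable] suminf_le_const[OF summable partial]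
    by simp
qed

lemma trunc_moment_comparison:
  assumes B: "B \<in> sets M" "factorizes_after B t\<^sub>0" and ab: "0 \<le> t\<^sub>0" "t\<^sub>0 \<le> a" "0 < a" "a \<le> b" "b \<le> 1"
    and "continuous_on {a..b} V"
    and "\<And>t. t \<in> {a..<b} \<Longrightarrow> (V has_real_derivative \<alpha> t + \<kappa> / t * V t) (at t within {t..})"
    and rate: "\<And>t. t \<in> {a..<b} \<Longrightarrow> trunc_rate c N B t \<le> \<alpha> t + \<kappa> / t * trunc_moment c N B t"
  shows "b powr (-\<kappa>) * (trunc_moment c N B b - V b) \<le> a powr (-\<kappa>) * (trunc_moment c N B a - V a)"
proof (rule ode_comparison_upper[OF ab(3,4) _ assms(8,9)])
  show "continuous_on {a..b} (\<lambda>u. trunc_moment c N B u)"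
    by (rule continuous_on_subset[OF continuous_on_trunc_moment[OF B(1)]]) (use ab in auto)
  fix t assume t: "t \<in> {a..<b}"
  have "((\<lambda>u. trunc_moment c N B u) has_real_derivative trunc_rate c N B t) (at t within {t..})"
    using t ab by (intro trunc_moment_right_derivative[OF B ab(1)]) auto
  with rate[OF t] show "\<exists>D. ((\<lambda>u. trunc_moment c N B u) has_real_derivative D) (at t within {t..}) \<and>
            D \<le> \<alpha> t + \<kappa> / t * trunc_moment c N B t" by blast
qed

text \<open>The truncation error \<open>cumsum c y - cumsum c (min y N)\<close> is nondecreasing in \<open>y\<close>.\<close>

lemma trunc_moment_increment_le:
  assumes B: "B \<in> sets M" and c: "\<And>k. 0 \<le> c k" and t: "0 \<le> t" "t \<le> t'" "t' \<le> 1"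
    and integrable: "\<And>u. u \<in> {t, t'} \<Longrightarrow> integrable M (\<lambda>\<omega>. indicator B \<omega> * cumsum c (Y u \<omega>))"
  shows "trunc_moment c N B t' - trunc_moment c N B t \<le> expect_on B (cumsum c) t' - expect_on B (cumsum c) t"
proof -
  have ts: "t \<in> {0..1}" "t' \<in> {0..1}" using t by auto
  have int_min: "integrable M (\<lambda>\<omega>. indicator B \<omega> * cumsum c (min (Y u \<omega>) N))" if "u \<in> {0..1}" for u
    using that by (intro integrable_restrict_Y_bounded[OF B, of _ _ "cumsum c N"])
                  (auto simp: cumsum_nonneg cumsum_le c)
  have "expect_on B (\<lambda>y. cumsum c y - cumsum c (min y N)) t
      \<le> expect_on B (\<lambda>y. cumsum c y - cumsum c (min y N)) t'"
    using ts t
    by (intro expect_on_mono_time B mono_cumsum_diff_min c)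
       (auto simp: right_diff_distrib intro!: Bochner_Integration.integrable_diff integrable int_min)
  then show ?thesis
    using ts by (simp add: expect_on_diff integrable int_min trunc_moment_eq_expect_on B)
qed

text \<open>By the convergence of the rates, the truncated moments witness that the full moment is an
  approximate supersolution.\<close>

lemma moment_comparison:
  assumes B: "B \<in> sets M" "factorizes_after B t\<^sub>0" and ab: "0 \<le> t\<^sub>0" "t\<^sub>0 \<le> a" "0 < a" "a \<le> b" "b \<le> 1"
    and c: "\<And>k. 0 \<le> c k"
    and integrable: "\<And>t. t \<in> {a..b} \<Longrightarrow> integrable M (\<lambda>\<omega>. indicator B \<omega> * cumsum c (Y t \<omega>))"
    and "continuous_on {a..b} V"
    and "\<And>t. t \<in> {a..<b} \<Longrightarrow> (V has_real_derivative \<alpha> t + \<kappa> / t * V t) (at t within {t..})"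
    and rate: "\<And>t. t \<in> {a..<b} \<Longrightarrow>
                 (\<lambda>N. trunc_rate c N B t) \<longlonglongrightarrow> \<alpha> t + \<kappa> / t * expect_on B (cumsum c) t"
  shows "a powr (-\<kappa>) * (expect_on B (cumsum c) a - V a) \<le> b powr (-\<kappa>) * (expect_on B (cumsum c) b - V b)"
proof (rule ode_comparison_lower[OF ab(3,4) assms(10,11)])
  fix s t assume "a \<le> s" "s \<le> t" "t \<le> b"
  then show "expect_on B (cumsum c) s \<le> expect_on B (cumsum c) t"
    using ab by (intro expect_on_mono_time B(1) mono_cumsum c integrable) auto
next
  fix t e :: real assume t: "t \<in> {a..<b}" and "e > 0"
  have "eventually (\<lambda>N. \<alpha> t + \<kappa> / t * expect_on B (cumsum c) t - e < trunc_rate c N B t) sequentially"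
    using \<open>e > 0\<close> by (intro order_tendstoD(1)[OF rate[OF t]]) simp
  then obtain N where "\<alpha> t + \<kappa> / t * expect_on B (cumsum c) t - e \<le> trunc_rate c N B t"
    by (auto simp: eventually_sequentially intro: less_imp_le)
  moreover have "((\<lambda>u. trunc_moment c N B u) has_real_derivative trunc_rate c N B t) (at t within {t..})"
    using t ab by (intro trunc_moment_right_derivative[OF B ab(1)]) auto
  moreover have "trunc_moment c N B (t + h) - trunc_moment c N B t
      \<le> expect_on B (cumsum c) (t + h) - expect_on B (cumsum c) t" if "h > 0" "t + h \<le> b" for h
    using t ab that by (intro trunc_moment_increment_le B(1) c integrable) auto
  ultimately show "\<exists>T D. (T has_real_derivative D) (at t within {t..}) \<and>
      \<alpha> t + \<kappa> / t * expect_on B (cumsum c) t - e \<le> D \<and>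
      (\<forall>h>0. t + h \<le> b \<longrightarrow> T (t + h) - T t \<le> expect_on B (cumsum c) (t + h) - expect_on B (cumsum c) t)"
    by blast
qed

end

section \<open>The Yule-Simon process\<close>

locale yule_simon = pure_birth M Y "yule_simon_rate \<rho>"
  for M :: "'a measure" and Y :: "real \<Rightarrow> 'a \<Rightarrow> nat" and \<rho> :: real +
  assumes rho_pos: "\<rho> > 0"
begin

lemma p_ge_space_0: "p_ge (space M) t 0 = 1"
  by (simp add: p_ge_def prob_space)

lemma p_ge_space_Suc_0_at_0: "p_ge (space M) 0 (Suc 0) = 0"
proof -
  have "p_ge (space M) 0 (Suc 0) = measure M {}"
    unfolding p_ge_def using AE_Y_0 by (intro measure_eq_AE) (auto elim!: eventually_mono intro: sets_Y)
  then show ?thesis by simp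
qed

text \<open>\<open>P(Y u = 0)\<close> solves \<open>g' = - g / (1 - u)\<close> with \<open>g 0 = 1\<close>, so \<open>(1 - P(Y u \<ge> 1)) / (1 - u)\<close> is constant.\<close>

lemma p_ge_space_Suc_0_less_1:
  assumes "0 \<le> t" "t < 1"
  shows "p_ge (space M) t (Suc 0) = t"
proof -
  define f where "f u = (1 - p_ge (space M) u (Suc 0)) / (1 - u)" for u
  have "f 0 = f t"
  proof (rule right_derivative_zero_imp_eq[OF \<open>0 \<le> t\<close>])
    show "continuous_on {0..t} f" unfolding f_def using assms
      by (intro continuous_intros continuous_on_subset[OF continuous_on_p_ge]) auto
    fix u assume u: "u \<in> {0..<t}"
    then have "u \<in> {0..1}" "u < 1" using assms by auto
    have "(f has_real_derivative ((0 - yule_simon_rate \<rho> 0 u * p_eq (space M) u 0) * (1 - u)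
            - (1 - p_ge (space M) u (Suc 0)) * (0 - 1)) / ((1 - u) * (1 - u))) (at u within {u..})"
      unfolding f_def using \<open>u < 1\<close> u
      by (intro DERIV_divide DERIV_diff DERIV_const DERIV_ident
            p_ge_right_derivative[OF _ factorizes_after_space]) auto
    moreover have "p_eq (space M) u 0 = 1 - p_ge (space M) u (Suc 0)"
      using p_ge_Suc[OF _ \<open>u \<in> {0..1}\<close>, of "space M" 0] by (simp add: p_ge_space_0)
    ultimately show "(f has_real_derivative 0) (at u within {u..})"
      using \<open>u < 1\<close> by (simp add: yule_simon_rate_def)
  qed
  then show ?thesis using assms p_ge_space_Suc_0_at_0 by (simp add: f_def field_simps)
qed

lemma p_ge_space_Suc_0:
  assumes "t \<in> {0..1}"
  shows "p_ge (space M) t (Suc 0) = t"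
proof (cases "t < 1")
  case False
  with assms have "t = 1" by simp
  have "1 \<le> p_ge (space M) 1 (Suc 0)"
  proof (rule dense_le_bounded[of 0])
    fix w :: real assume "0 < w" "w < 1"
    then show "w \<le> p_ge (space M) 1 (Suc 0)"
      using p_ge_space_Suc_0_less_1[of w] p_ge_mono_time[of "space M" w 1 "Suc 0"] by simp
  qed simp
  moreover have "p_ge (space M) 1 (Suc 0) \<le> 1" by (simp add: p_ge_def)
  ultimately show ?thesis using \<open>t = 1\<close> by simp
qed (use assms p_ge_space_Suc_0_less_1 in auto)

lemma p_eq_space_0: "t \<in> {0..1} \<Longrightarrow> p_eq (space M) t 0 = 1 - t"
  using p_ge_Suc[of "space M" t 0] p_ge_space_Suc_0 by (simp add: p_ge_space_0)

lemma trunc_rate_Suc: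
  assumes "t > 0"
  shows "trunc_rate c (Suc N) B t
       = c 0 * p_eq B t 0 / (1 - t) + 1 / (\<rho> * t) * (\<Sum>k<Suc N. c k * real k * p_eq B t k)"
proof (induction N)
  case (Suc N)
  have "c (Suc N) * (yule_simon_rate \<rho> (Suc N) t * p_eq B t (Suc N))
      = 1 / (\<rho> * t) * (c (Suc N) * real (Suc N) * p_eq B t (Suc N))"
    using assms rho_pos by (simp add: yule_simon_rate_def field_simps)
  with Suc.IH show ?case by (simp add: trunc_rate_def algebra_simps)
qed (unfold trunc_rate_def, simp add: yule_simon_rate_def)

lemma trunc_rate_space_Suc:
  assumes "0 < t" "t < 1"
  shows "trunc_rate c (Suc N) (space M) t
       = c 0 + 1 / (\<rho> * t) * (\<Sum>k<Suc N. c k * real k * p_eq (space M) t k)"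
  using trunc_rate_Suc[OF assms(1)] p_eq_space_0[of t] assms by simp

text \<open>A moment growing linearly, \<open>V t = A t\<close>: the comparison is run on \<open>[a, b]\<close> and \<open>a\<close> is sent to
  \<open>0\<close>, where the integrating factor \<open>a powr (-\<kappa>)\<close> only costs \<open>a powr (1 - \<kappa>) \<longrightarrow> 0\<close>.\<close>

lemma trunc_moment_le_linear:
  assumes "\<kappa> < 1" "0 \<le> A" "\<And>k. 0 \<le> c k"
    and rate: "\<And>t. 0 < t \<Longrightarrow> t < 1 \<Longrightarrow>
      trunc_rate c N (space M) t \<le> A * (1 - \<kappa>) + \<kappa> / t * trunc_moment c N (space M) t"
    and "0 < b" "b \<le> 1"
  shows "trunc_moment c N (space M) b \<le> A * b"
proof -
  let ?T = "trunc_moment c N (space M)"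
  have "b powr (-\<kappa>) * (?T b - A * b) \<le> cumsum c N * a powr (1 - \<kappa>)" if a: "0 < a" "a \<le> b" for a
  proof -
    have "b powr (-\<kappa>) * (?T b - A * b) \<le> a powr (-\<kappa>) * (?T a - A * a)"
    proof (rule trunc_moment_comparison[OF sets.top factorizes_after_space])
      fix t assume "t \<in> {a..<b}"
      then show "trunc_rate c N (space M) t \<le> A * (1 - \<kappa>) + \<kappa> / t * ?T t"
        using a \<open>b \<le> 1\<close> by (intro rate) auto
    next
      fix t assume "t \<in> {a..<b}"
      then show "((\<lambda>u. A * u) has_real_derivative A * (1 - \<kappa>) + \<kappa> / t * (A * t)) (at t within {t..})"
        using a by (intro has_real_derivative_linear_solution) auto
    qed (use a \<open>b \<le> 1\<close> in \<open>auto intro: continuous_intros\<close>)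
    also have "\<dots> \<le> a powr (-\<kappa>) * ?T a"
      using a \<open>0 \<le> A\<close> by (intro mult_left_mono) auto
    also have "\<dots> \<le> a powr (-\<kappa>) * (cumsum c N * a)"
      using trunc_moment_le[OF sets.top, of a c N] p_ge_space_Suc_0[of a] a \<open>b \<le> 1\<close> assms(3)
      by (intro mult_left_mono) auto
    finally show ?thesis using powr_neg_mult_self a by simp
  qed
  then have "b powr (-\<kappa>) * (?T b - A * b) \<le> 0"
    by (rule nonpos_if_le_powr_at_right_0[OF \<open>\<kappa> < 1\<close> \<open>0 < b\<close>])
  then show ?thesis using \<open>0 < b\<close> by (simp add: mult_le_0_iff)
qed

lemma linear_le_expect_on_cumsum:
  assumes "\<kappa> < 1" "\<And>k. 0 \<le> c k"
    and integrable: "\<And>t. 0 < t \<Longrightarrow> t \<le> 1 \<Longrightarrow> integrable M (\<lambda>\<omega>. indicator (space M) \<omega> * cumsum c (Y t \<omega>))"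
    and rate: "\<And>t. 0 < t \<Longrightarrow> t < 1 \<Longrightarrow>
      (\<lambda>N. trunc_rate c N (space M) t) \<longlonglongrightarrow> A * (1 - \<kappa>) + \<kappa> / t * expect_on (space M) (cumsum c) t"
    and "0 < b" "b \<le> 1"
  shows "A * b \<le> expect_on (space M) (cumsum c) b"
proof -
  let ?F = "expect_on (space M) (cumsum c)"
  have "- (b powr (-\<kappa>) * (?F b - A * b)) \<le> A * a powr (1 - \<kappa>)" if a: "0 < a" "a \<le> b" for a
  proof -
    have "a powr (-\<kappa>) * (?F a - A * a) \<le> b powr (-\<kappa>) * (?F b - A * b)"
    proof (rule moment_comparison[OF sets.top factorizes_after_space])
      fix t assume "t \<in> {a..<b}"
      then show "(\<lambda>N. trunc_rate c N (space M) t) \<longlonglongrightarrow> A * (1 - \<kappa>) + \<kappa> / t * ?F t"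
        using a \<open>b \<le> 1\<close> by (intro rate) auto
    next
      fix t assume "t \<in> {a..<b}"
      then show "((\<lambda>u. A * u) has_real_derivative A * (1 - \<kappa>) + \<kappa> / t * (A * t)) (at t within {t..})"
        using a by (intro has_real_derivative_linear_solution) auto
    qed (use a \<open>b \<le> 1\<close> assms(2) integrable in \<open>auto intro: continuous_intros\<close>)
    moreover have "a powr (-\<kappa>) * (- (A * a)) \<le> a powr (-\<kappa>) * (?F a - A * a)"
      using expect_on_nonneg[OF cumsum_nonneg[OF assms(2)]] by (intro mult_left_mono) auto
    ultimately show ?thesis using powr_neg_mult_self[OF \<open>0 < a\<close>, where C = A] by simp
  qed
  then have "- (b powr (-\<kappa>) * (?F b - A * b)) \<le> 0"
    by (rule nonpos_if_le_powr_at_right_0[OF \<open>\<kappa> < 1\<close> \<open>0 < b\<close>])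
  then show ?thesis using \<open>0 < b\<close> by (simp add: zero_le_mult_iff)
qed

lemma expect_on_cumsum_eq_linear:
  assumes "\<kappa> < 1" "0 \<le> A" "\<And>k. 0 \<le> c k"
    and upper: "\<And>t N. 0 < t \<Longrightarrow> t < 1 \<Longrightarrow>
      trunc_rate c N (space M) t \<le> A * (1 - \<kappa>) + \<kappa> / t * trunc_moment c N (space M) t"
    and lower: "\<And>t. 0 < t \<Longrightarrow> t < 1 \<Longrightarrow> integrable M (\<lambda>\<omega>. indicator (space M) \<omega> * cumsum c (Y t \<omega>)) \<Longrightarrow>
      (\<lambda>N. trunc_rate c N (space M) t) \<longlonglongrightarrow> A * (1 - \<kappa>) + \<kappa> / t * expect_on (space M) (cumsum c) t"
    and "0 < b" "b \<le> 1"
  shows "integrable M (\<lambda>\<omega>. indicator (space M) \<omega> * cumsum c (Y b \<omega>))"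
    and "expect_on (space M) (cumsum c) b = A * b"
proof -
  have integrable: "integrable M (\<lambda>\<omega>. indicator (space M) \<omega> * cumsum c (Y u \<omega>))"
    and le: "expect_on (space M) (cumsum c) u \<le> A * u" if "0 < u" "u \<le> 1" for u
    using integrable_if_trunc_moment_bounded[OF sets.top _ assms(3)
            trunc_moment_le_linear[OF assms(1-3) upper]]
      that by auto
  then show "integrable M (\<lambda>\<omega>. indicator (space M) \<omega> * cumsum c (Y b \<omega>))"
    using \<open>0 < b\<close> \<open>b \<le> 1\<close> by blast
  have "A * b \<le> expect_on (space M) (cumsum c) b"
  proof (rule linear_le_expect_on_cumsum[OF assms(1,3) integrable])
    fix t :: real assume "0 < t" "t < 1"
    then show "(\<lambda>N. trunc_rate c N (space M) t) \<longlonglongrightarrow> A * (1 - \<kappa>) + \<kappa> / t * expect_on (space M) (cumsum c) t"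
      using integrable[of t] by (intro lower) auto
  qed (use \<open>0 < b\<close> \<open>b \<le> 1\<close> in auto)
  with le[OF \<open>0 < b\<close> \<open>b \<le> 1\<close>] show "expect_on (space M) (cumsum c) b = A * b" by simp
qed

lemma mean:
  assumes "\<rho> > 1" "0 < t" "t \<le> 1"
  shows "integrable M (\<lambda>\<omega>. indicator (space M) \<omega> * real (Y t \<omega>))"
    and "expect_on (space M) real t = \<rho> / (\<rho> - 1) * t"
proof -
  have coeff: "\<rho> / (\<rho> - 1) * (1 - 1 / \<rho>) = 1" using assms(1) by (simp add: field_simps)
  have rate: "trunc_rate (\<lambda>_. 1) (Suc N) (space M) u
      = 1 + 1 / \<rho> / u * (\<Sum>k<Suc N. real k * p_eq (space M) u k)"
    if "0 < u" "u < 1" for u N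
    using trunc_rate_space_Suc[OF that, of "\<lambda>_. 1" N] by simp
  have upper: "trunc_rate (\<lambda>_. 1) N (space M) u
      \<le> \<rho> / (\<rho> - 1) * (1 - 1 / \<rho>) + 1 / \<rho> / u * trunc_moment (\<lambda>_. 1) N (space M) u"
    if u: "0 < u" "u < 1" for u N
  proof (cases N)
    case 0
    then show ?thesis unfolding coeff by (simp add: trunc_rate_def trunc_moment_def)
  next
    case (Suc N')
    have "(\<Sum>k<N. real k * p_eq (space M) u k) \<le> trunc_moment (\<lambda>_. 1) N (space M) u"
      using sum_cumsum_p_eq_le_trunc_moment[OF sets.top, of u "\<lambda>_. 1" N] u by (simp add: cumsum_one)
    then show ?thesis
      unfolding coeff Suc rate[OF u] using u rho_pos
      by (intro add_left_mono mult_left_mono) (simp_all add: Suc)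
  qed
  have lower: "(\<lambda>N. trunc_rate (\<lambda>_. 1) N (space M) u)
      \<longlonglongrightarrow> \<rho> / (\<rho> - 1) * (1 - 1 / \<rho>) + 1 / \<rho> / u * expect_on (space M) (cumsum (\<lambda>_. 1)) u"
    if u: "0 < u" "u < 1" and "integrable M (\<lambda>\<omega>. indicator (space M) \<omega> * cumsum (\<lambda>_. 1) (Y u \<omega>))" for u
  proof -
    have "(\<lambda>N. \<Sum>k<N. real k * p_eq (space M) u k) \<longlonglongrightarrow> expect_on (space M) real u"
      using that by (intro partial_sums_tendsto_expect_on) (auto simp: cumsum_one)
    then have "(\<lambda>N. trunc_rate (\<lambda>_. 1) (Suc N) (space M) u)
        \<longlonglongrightarrow> 1 + 1 / \<rho> / u * expect_on (space M) real u"
      unfolding rate[OF u] by (intro tendsto_intros LIMSEQ_Suc)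
    then show ?thesis unfolding coeff cumsum_one by (rule LIMSEQ_imp_Suc)
  qed
  show "integrable M (\<lambda>\<omega>. indicator (space M) \<omega> * real (Y t \<omega>))"
    and "expect_on (space M) real t = \<rho> / (\<rho> - 1) * t"
    using expect_on_cumsum_eq_linear[OF _ _ _ upper lower] assms by (simp_all add: cumsum_one)
qed

lemma trunc_rate_odd_Suc:
  assumes "0 < u" "u < 1"
  shows "trunc_rate (\<lambda>k. 2 * real k + 1) (Suc N) (space M) u
       = 1 + 1 / (\<rho> * u) * (2 * (\<Sum>k<Suc N. real k ^ 2 * p_eq (space M) u k)
                              + (\<Sum>k<Suc N. real k * p_eq (space M) u k))"
  using trunc_rate_space_Suc[OF assms, of "\<lambda>k. 2 * real k + 1" N] sum_odd_times_eq by simp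

lemma trunc_rate_odd_le:
  assumes "\<rho> > 1" "0 < u" "u < 1"
  shows "trunc_rate (\<lambda>k. 2 * real k + 1) N (space M) u
       \<le> 1 + 1 / (\<rho> * u) * (2 * trunc_moment (\<lambda>k. 2 * real k + 1) N (space M) u + \<rho> / (\<rho> - 1) * u)"
proof (cases N)
  case 0
  then show ?thesis using assms rho_pos by (simp add: trunc_rate_def trunc_moment_def)
next
  case (Suc N')
  have "(\<Sum>k<N. real k ^ 2 * p_eq (space M) u k) \<le> trunc_moment (\<lambda>k. 2 * real k + 1) N (space M) u"
    using sum_cumsum_p_eq_le_trunc_moment[OF sets.top, of u "\<lambda>k. 2 * real k + 1" N] assms
    by (simp add: cumsum_odd)
  moreover have "(\<Sum>k<N. real k * p_eq (space M) u k) \<le> \<rho> / (\<rho> - 1) * u"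
    using sum_p_eq_le_expect_on[OF sets.top, of u real] mean[of u] assms by simp
  ultimately show ?thesis
    unfolding Suc trunc_rate_odd_Suc[OF assms(2,3)] using assms rho_pos
    by (intro add_left_mono mult_left_mono add_mono) (simp_all add: Suc)
qed

lemma second_moment:
  assumes "\<rho> > 2" "0 < t" "t \<le> 1"
  shows "integrable M (\<lambda>\<omega>. indicator (space M) \<omega> * real (Y t \<omega>) ^ 2)"
    and "expect_on (space M) (\<lambda>y. real y ^ 2) t = \<rho>\<^sup>2 / ((\<rho> - 1) * (\<rho> - 2)) * t"
proof -
  let ?A = "\<rho>\<^sup>2 / ((\<rho> - 1) * (\<rho> - 2))" and ?c = "\<lambda>k. 2 * real k + 1"
  have cumsum_c: "cumsum ?c = (\<lambda>y. real y ^ 2)" by (simp add: fun_eq_iff cumsum_odd)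
  have "\<rho> - 1 \<noteq> 0" "\<rho> - 2 \<noteq> 0" "\<rho> \<noteq> 0" using assms(1) by auto
  then have coeff: "?A * (1 - 2 / \<rho>) = \<rho> / (\<rho> - 1)" by (simp add: divide_simps power2_eq_square)
  have combine: "1 + 1 / (\<rho> * u) * (2 * X + \<rho> / (\<rho> - 1) * u) = ?A * (1 - 2 / \<rho>) + 2 / \<rho> / u * X"
    if "0 < u" for u X using that assms(1) unfolding coeff by (simp add: field_simps)
  have upper: "trunc_rate ?c N (space M) u \<le> ?A * (1 - 2 / \<rho>) + 2 / \<rho> / u * trunc_moment ?c N (space M) u"
    if "0 < u" "u < 1" for u N
    using trunc_rate_odd_le[of u N] that assms(1) unfolding combine[OF \<open>0 < u\<close>] by simp
  have lower: "(\<lambda>N. trunc_rate ?c N (space M) u)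
      \<longlonglongrightarrow> ?A * (1 - 2 / \<rho>) + 2 / \<rho> / u * expect_on (space M) (cumsum ?c) u"
    if u: "0 < u" "u < 1" and "integrable M (\<lambda>\<omega>. indicator (space M) \<omega> * cumsum ?c (Y u \<omega>))" for u
  proof -
    have "(\<lambda>N. \<Sum>k<N. real k ^ 2 * p_eq (space M) u k) \<longlonglongrightarrow> expect_on (space M) (\<lambda>y. real y ^ 2) u"
      using that by (intro partial_sums_tendsto_expect_on) (auto simp: cumsum_c)
    moreover have "(\<lambda>N. \<Sum>k<N. real k * p_eq (space M) u k) \<longlonglongrightarrow> \<rho> / (\<rho> - 1) * u"
      using partial_sums_tendsto_expect_on[OF sets.top, of u real] mean[of u] assms(1) u by simp
    ultimately have "(\<lambda>N. trunc_rate ?c (Suc N) (space M) u)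
        \<longlonglongrightarrow> 1 + 1 / (\<rho> * u) * (2 * expect_on (space M) (\<lambda>y. real y ^ 2) u + \<rho> / (\<rho> - 1) * u)"
      unfolding trunc_rate_odd_Suc[OF u] by (intro tendsto_intros LIMSEQ_Suc)
    then show ?thesis unfolding cumsum_c combine[OF \<open>0 < u\<close>] by (rule LIMSEQ_imp_Suc)
  qed
  show "integrable M (\<lambda>\<omega>. indicator (space M) \<omega> * real (Y t \<omega>) ^ 2)"
    and "expect_on (space M) (\<lambda>y. real y ^ 2) t = ?A * t"
    using expect_on_cumsum_eq_linear[OF _ _ _ upper lower] assms by (simp_all add: cumsum_c)
qed

lemma p_eq_level_0:
  assumes "0 \<le> s" "s \<le> t" "t \<le> 1" "j \<ge> 1"
  shows "p_eq {\<omega>\<in>space M. Y s \<omega> = j} t 0 = 0"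
proof -
  have "p_eq {\<omega>\<in>space M. Y s \<omega> = j} t 0 = measure M {}"
    unfolding p_eq_def using AE_Y_mono[OF assms(1-3)] assms sets_Y_pair[of s t "\<lambda>a b. a = j \<and> b = 0"]
    by (intro measure_eq_AE) (auto elim!: eventually_mono)
  then show ?thesis by simp
qed

lemma expect_on_level_self:
  assumes "s \<in> {0..1}"
  shows "expect_on {\<omega>\<in>space M. Y s \<omega> = j} \<phi> s = \<phi> j * p_eq (space M) s j"
proof -
  have "expect_on {\<omega>\<in>space M. Y s \<omega> = j} \<phi> s
      = \<phi> j * expect_on {\<omega>\<in>space M. Y s \<omega> = j} (\<lambda>y. of_bool (y = j)) s"
    unfolding expect_on_def
    by (subst integral_mult_right_zero[symmetric], rule Bochner_Integration.integral_cong)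
       (auto simp: indicator_def)
  also have "\<dots> = \<phi> j * p_eq (space M) s j"
    using assms by (subst expect_on_of_bool)
                   (auto intro: sets_Y simp: p_eq_def intro!: arg_cong[where f = "measure M"])
  finally show ?thesis .
qed

definition cond_mean :: "real \<Rightarrow> nat \<Rightarrow> real \<Rightarrow> real" where
  "cond_mean s j u = real j * p_eq (space M) s j / s powr (1 / \<rho>) * u powr (1 / \<rho>)"

lemma cond_mean_self: "s > 0 \<Longrightarrow> cond_mean s j s = real j * p_eq (space M) s j"
  by (simp add: cond_mean_def)

lemma cond_mean_eq: "s > 0 \<Longrightarrow> cond_mean s j u = real j * p_eq (space M) s j * (u / s) powr (1 / \<rho>)"
  by (simp add: cond_mean_def powr_divide)

lemma has_real_derivative_cond_mean:
  assumes "u > 0"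
  shows "(cond_mean s j has_real_derivative 0 + 1 / \<rho> / u * cond_mean s j u) (at u within S)"
proof -
  define C where "C = real j * p_eq (space M) s j / s powr (1 / \<rho>)"
  have "cond_mean s j = (\<lambda>u. C * u powr (1 / \<rho>))" by (simp add: cond_mean_def C_def fun_eq_iff)
  moreover have "C * (1 / \<rho> * u powr (1 / \<rho>) / u) = 0 + 1 / \<rho> / u * (C * u powr (1 / \<rho>))" by simp
  ultimately show ?thesis
    using DERIV_cmult[OF has_real_derivative_powr_within[OF assms, where r = "1 / \<rho>" and S = S],
                      where c = C]
    by simp
qed

lemma continuous_on_cond_mean: "a > 0 \<Longrightarrow> continuous_on {a..b} (cond_mean s j)"
  unfolding cond_mean_def by (intro continuous_intros) auto

lemma trunc_rate_level:
  assumes "0 < s" "s \<le> u" "u \<le> 1" "j \<ge> 1"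
  shows "trunc_rate (\<lambda>_. 1) N {\<omega>\<in>space M. Y s \<omega> = j} u
       = 1 / \<rho> / u * (\<Sum>k<N. real k * p_eq {\<omega>\<in>space M. Y s \<omega> = j} u k)"
proof (cases N)
  case (Suc N')
  then show ?thesis
    using trunc_rate_Suc[of u "\<lambda>_. 1" N' "{\<omega>\<in>space M. Y s \<omega> = j}"] p_eq_level_0[of s u j] assms by simp
qed (simp add: trunc_rate_def)

lemma expect_on_level_le:
  assumes s: "0 < s" "s \<le> t" "t \<le> 1" and "j \<ge> 1"
  shows "integrable M (\<lambda>\<omega>. indicator {\<omega>\<in>space M. Y s \<omega> = j} \<omega> * real (Y t \<omega>))"
    and "expect_on {\<omega>\<in>space M. Y s \<omega> = j} real t \<le> cond_mean s j t"
proof -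
  let ?B = "{\<omega>\<in>space M. Y s \<omega> = j}" and ?\<kappa> = "1 / \<rho>"
  have B: "?B \<in> sets M" "factorizes_after ?B s" using s by (auto intro: sets_Y factorizes_after_level)
  have "trunc_moment (\<lambda>_. 1) N ?B t \<le> cond_mean s j t" for N
  proof -
    have "t powr (-?\<kappa>) * (trunc_moment (\<lambda>_. 1) N ?B t - cond_mean s j t)
        \<le> s powr (-?\<kappa>) * (trunc_moment (\<lambda>_. 1) N ?B s - cond_mean s j s)"
    proof (rule trunc_moment_comparison[OF B])
      fix u assume u: "u \<in> {s..<t}"
      have "(\<Sum>k<N. real k * p_eq ?B u k) \<le> trunc_moment (\<lambda>_. 1) N ?B u"
        using sum_cumsum_p_eq_le_trunc_moment[OF B(1), of u "\<lambda>_. 1" N] u s by (simp add: cumsum_one)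
      then show "trunc_rate (\<lambda>_. 1) N ?B u \<le> 0 + ?\<kappa> / u * trunc_moment (\<lambda>_. 1) N ?B u"
        using trunc_rate_level[of s u j N] u s \<open>j \<ge> 1\<close> rho_pos by (simp add: divide_right_mono)
    next
      fix u assume "u \<in> {s..<t}"
      then show "(cond_mean s j has_real_derivative 0 + ?\<kappa> / u * cond_mean s j u) (at u within {u..})"
        using s by (intro has_real_derivative_cond_mean) auto
    qed (use s in \<open>auto intro: continuous_on_cond_mean\<close>)
    also have "trunc_moment (\<lambda>_. 1) N ?B s \<le> cond_mean s j s"
      using s trunc_moment_eq_expect_on[OF B(1), of s "\<lambda>_. 1" N] expect_on_level_self[of s j]
      by (simp add: cond_mean_self cumsum_one mult_right_mono p_eq_nonneg)
    then have "s powr (-?\<kappa>) * (trunc_moment (\<lambda>_. 1) N ?B s - cond_mean s j s) \<le> 0"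
      by (simp add: mult_nonneg_nonpos)
    finally show ?thesis using s by (simp add: mult_le_0_iff)
  qed
  then show "integrable M (\<lambda>\<omega>. indicator ?B \<omega> * real (Y t \<omega>))"
    and "expect_on ?B real t \<le> cond_mean s j t"
    using integrable_if_trunc_moment_bounded[OF B(1), of t "\<lambda>_. 1"] s by (auto simp: cumsum_one)
qed

lemma expect_on_level:
  assumes s: "0 < s" "s \<le> t" "t \<le> 1" and "j \<ge> 1"
  shows "expect_on {\<omega>\<in>space M. Y s \<omega> = j} real t = real j * p_eq (space M) s j * (t / s) powr (1 / \<rho>)"
proof -
  let ?B = "{\<omega>\<in>space M. Y s \<omega> = j}" and ?\<kappa> = "1 / \<rho>"
  have B: "?B \<in> sets M" "factorizes_after ?B s" using s by (auto intro: sets_Y factorizes_after_level)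
  have "s powr (-?\<kappa>) * (expect_on ?B (cumsum (\<lambda>_. 1)) s - cond_mean s j s)
      \<le> t powr (-?\<kappa>) * (expect_on ?B (cumsum (\<lambda>_. 1)) t - cond_mean s j t)"
  proof (rule moment_comparison[OF B])
    fix u assume u: "u \<in> {s..<t}"
    then have "(\<lambda>N. \<Sum>k<N. real k * p_eq ?B u k) \<longlonglongrightarrow> expect_on ?B real u"
      using s expect_on_level_le(1)[of s u j] \<open>j \<ge> 1\<close>
      by (intro partial_sums_tendsto_expect_on B(1)) auto
    then have "(\<lambda>N. ?\<kappa> / u * (\<Sum>k<N. real k * p_eq ?B u k)) \<longlonglongrightarrow> ?\<kappa> / u * expect_on ?B real u"
      by (rule tendsto_mult_left)
    then show "(\<lambda>N. trunc_rate (\<lambda>_. 1) N ?B u) \<longlonglongrightarrow> 0 + ?\<kappa> / u * expect_on ?B (cumsum (\<lambda>_. 1)) u"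
      using trunc_rate_level[of s u j] u s \<open>j \<ge> 1\<close> by (simp add: cumsum_one)
  next
    fix u assume "u \<in> {s..<t}"
    then show "(cond_mean s j has_real_derivative 0 + ?\<kappa> / u * cond_mean s j u) (at u within {u..})"
      using s by (intro has_real_derivative_cond_mean) auto
  qed (use s expect_on_level_le(1)[of s _ j] \<open>j \<ge> 1\<close> in
         \<open>auto simp: cumsum_one intro: continuous_on_cond_mean\<close>)
  then have "cond_mean s j t \<le> expect_on ?B real t"
    using s expect_on_level_self[of s j real] by (simp add: cond_mean_self cumsum_one zero_le_mult_iff)
  with expect_on_level_le(2)[OF assms] show ?thesis using s by (simp add: cond_mean_eq)
qed

lemma integral_Y:
  assumes "\<rho> > 1" "t \<in> {0..1}"
  shows "(\<integral>\<omega>. real (Y t \<omega>) \<partial>M) = \<rho> / (\<rho> - 1) * t"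
proof (cases "t = 0")
  case True
  have "(\<integral>\<omega>. real (Y 0 \<omega>) \<partial>M) = (\<integral>\<omega>. 0 \<partial>M)"
    using AE_Y_0 by (intro integral_cong_AE) (auto simp: measurable_compose[OF measurable_Y])
  with True show ?thesis by simp
next
  case False
  with assms mean(2)[of t] show ?thesis by (simp add: expect_on_space)
qed

text \<open>Conditioning on the value of \<open>Y s\<close>: \<open>E[Y t Y s] = \<Sum>\<^sub>j j E[Y t; Y s = j] = (t/s)^(1/\<rho>) E[(Y s)\<^sup>2]\<close>,
  summed by monotone convergence.\<close>

lemma integral_Y_times_Y:
  assumes "\<rho> > 2" "0 < s" "s \<le> t" "t \<le> 1"
  shows "(\<integral>\<omega>. real (Y t \<omega>) * real (Y s \<omega>) \<partial>M) = \<rho>\<^sup>2 / ((\<rho> - 1) * (\<rho> - 2)) * s * (t / s) powr (1 / \<rho>)"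
proof -
  let ?B = "\<lambda>j. {\<omega>\<in>space M. Y s \<omega> = j}" and ?K = "(t / s) powr (1 / \<rho>)"
  have st: "s \<in> {0..1}" "t \<in> {0..1}" using assms by auto
  define f where "f n \<omega> = (\<Sum>j<n. real j * (indicator (?B j) \<omega> * real (Y t \<omega>)))" for n \<omega>
  have f_eq: "f n \<omega> = (if Y s \<omega> < n then real (Y t \<omega>) * real (Y s \<omega>) else 0)" if "\<omega> \<in> space M" for n \<omega>
  proof -
    have "f n \<omega> = (\<Sum>j<n. (real j * real (Y t \<omega>)) * of_bool (Y s \<omega> = j))"
      unfolding f_def using that by (intro sum.cong) (auto simp: indicator_def)
    then show ?thesis by (simp add: sum_of_bool_eq mult.commute)
  qed
  have integrable_j: "integrable M (\<lambda>\<omega>. real j * (indicator (?B j) \<omega> * real (Y t \<omega>)))" for j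
    using expect_on_level_le(1)[of s t j] assms by (cases "j = 0") auto
  have "integrable M (f n)" for n
    unfolding f_def by (intro Bochner_Integration.integrable_sum integrable_j)
  moreover have "AE \<omega> in M. mono (\<lambda>n. f n \<omega>)" "\<And>n. AE \<omega> in M. 0 \<le> f n \<omega>"
    by (auto intro!: AE_I2 monoI simp: f_eq)
  moreover have "AE \<omega> in M. (\<lambda>n. f n \<omega>) \<longlonglongrightarrow> real (Y t \<omega>) * real (Y s \<omega>)"
  proof (intro AE_I2 impI tendsto_eventually)
    fix \<omega> assume \<omega>: "\<omega> \<in> space M"
    show "eventually (\<lambda>n. f n \<omega> = real (Y t \<omega>) * real (Y s \<omega>)) sequentially"
      using eventually_gt_at_top[of "Y s \<omega>"] by eventually_elim (simp add: f_eq[OF \<omega>])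
  qed
  moreover have "(\<lambda>n. integral\<^sup>L M (f n)) \<longlonglongrightarrow> \<rho>\<^sup>2 / ((\<rho> - 1) * (\<rho> - 2)) * s * ?K"
  proof -
    have "integral\<^sup>L M (f n) = (\<Sum>j<n. real j * expect_on (?B j) real t)" for n
      unfolding f_def expect_on_def by (subst Bochner_Integration.integral_sum[OF integrable_j]) simp
    also have "\<dots> n = (\<Sum>j<n. real j ^ 2 * p_eq (space M) s j) * ?K" for n
    proof -
      have "real j * expect_on (?B j) real t = real j ^ 2 * p_eq (space M) s j * ?K" for j
        using expect_on_level[of s t j] assms by (cases "j = 0") (auto simp: power2_eq_square)
      then show ?thesis by (simp add: sum_distrib_right)
    qed
    finally show ?thesis
      using tendsto_mult_right[OF partial_sums_tendsto_expect_on[OF sets.top st(1), of "\<lambda>y. real y ^ 2"],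
                               of ?K]
        second_moment[of s] assms by simp
  qed
  moreover have "(\<lambda>\<omega>. real (Y t \<omega>) * real (Y s \<omega>)) \<in> borel_measurable M"
    using measurable_compose[OF measurable_Y[OF st(2)], of real borel]
      measurable_compose[OF measurable_Y[OF st(1)], of real borel] by auto
  ultimately show ?thesis
    by (rule integral_monotone_convergence_nonneg(2))
qed

end

theorem corollary2:
  fixes M :: "'a measure" and Y :: "real \<Rightarrow> 'a \<Rightarrow> nat" and \<rho> :: real
  assumes "\<rho> > 0" and "yule_simon_process M Y \<rho>"
  shows "(\<rho> > 1 \<longrightarrow>
            (\<forall>t\<in>{0..1}. (\<integral>\<omega>. real (Y t \<omega>) \<partial>M) = \<rho> / (\<rho> - 1) * t)) \<and>
         (\<rho> > 2 \<longrightarrow>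
            (\<forall>s t. 0 < s \<and> s \<le> t \<and> t \<le> 1 \<longrightarrow>
               (\<integral>\<omega>. real (Y t \<omega>) * real (Y s \<omega>) \<partial>M)
                 = \<rho>\<^sup>2 / ((\<rho> - 1) * (\<rho> - 2)) * s * (t / s) powr (1 / \<rho>)))"
proof -
  interpret yule_simon M Y \<rho>
    using assms by unfold_locales (simp_all add: yule_simon_process_def)
  show ?thesis using integral_Y integral_Y_times_Y by blast
qed

end
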